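(* Let $\alpha,\beta>0$ and $f$ as in the context. Let $(\mathbf{V}^0,\mathbf{P}^0)\in\ell^\infty(\mathbb{Z})\times\ell^\infty(\mathbb{Z})$ be nonnegative and not identically zero, and let $(\mathbf{V},\mathbf{P})$ be the unique global classical solution of $$V_j'(t)=-2\alpha V_j(t)+\beta(P_j(t)+P_{j+1}(t)),\qquad P_j'(t)=f(P_j(t))+\alpha(V_j(t)+V_{j-1}(t))-2\beta P_j(t),\qquad t>0,\ j\in\mathbb{Z},$$ with $(\mathbf{V}(0),\mathbf{P}(0))=(\mathbf{V}^0,\mathbf{P}^0)$. Then $\lim_{t\to+\infty}(V_j(t),P_j(t))=(\beta/\alpha,1)$ locally uniformly in $j\in\mathbb{Z}$.
   Context: $f\in\mathscr{C}^1([0,1])$ satisfies $f(0)=f(1)=0$ and $0<f(u)\le f'(0)u$ for $u\in(0,1)$, extended to a locally Lipschitz function on $\mathbb{R}$ negative on $\mathbb{R}\setminus[0,1]$. Existence and uniqueness of a bounded global classical solution ($V_j,P_j\in\mathscr{C}^1([0,\infty))$) for such data is established in the paper. *)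

theory Defs
  imports "HOL-Analysis.Analysis"
begin

definition kpp_nonlinearity :: "(real \<Rightarrow> real) \<Rightarrow> bool" where
  "kpp_nonlinearity f \<longleftrightarrow>
     (\<exists>f'. continuous_on {0..1} f' \<and>
           (\<forall>u\<in>{0..1}. (f has_real_derivative f' u) (at u within {0..1})) \<and>
           (\<forall>u\<in>{0<..<1}. 0 < f u \<and> f u \<le> f' 0 * u)) \<and>
     f 0 = 0 \<and> f 1 = 0 \<and>
     (\<forall>R. \<exists>L. \<forall>x y. \<bar>x\<bar> \<le> R \<longrightarrow> \<bar>y\<bar> \<le> R \<longrightarrow> \<bar>f x - f y\<bar> \<le> L * \<bar>x - y\<bar>) \<and>
     (\<forall>u. u \<notin> {0..1} \<longrightarrow> f u < 0)"

end

(* Comparison principle for the lattice system (cooperative, since alpha, beta > 0), proved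
   with a weight 1 + |j| and an exponential barrier so that the first touching time only
   involves finitely many sites.  The solution is nonnegative (compare with 0) and, once some
   site is positive, positive everywhere (linear growth bounds propagate positivity from a site
   to its neighbours).  From above it is trapped by the spatially homogeneous super-solution
   (beta/alpha B(t) + e, B(t)) with B(t) decreasing to 1 + delta, using f < 0 on (1, oo).  From
   below, f(u) >= r u near 0 lets a logistically growing multiple of a wide half-cosine bump
   (the discrete Laplacian of cos(theta j) is a multiple of itself) serve as a sub-solution
   whose amplitude tends to (1 - eta)(beta/alpha, 1) near the centre. *)
theory Submission
  imports Defs "HOL-Real_Asymp.Real_Asymp"
begin

lemma deriv_nonneg_at_first_zero:
  fixes u :: "real \<Rightarrow> real"
  assumes "a < s" "(u has_real_derivative D) (at s)" "u s = 0"
    and neg: "\<And>t. a \<le> t \<Longrightarrow> t < s \<Longrightarrow> u t < 0"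
  shows "0 \<le> D"
proof (rule ccontr)
  assume "\<not> 0 \<le> D"
  then obtain d where "0 < d" and d: "\<And>h. 0 < h \<Longrightarrow> h < d \<Longrightarrow> u s < u (s - h)"
    using DERIV_neg_dec_left[OF assms(2)] by force
  define h where "h = min (d / 2) (s - a)"
  have "0 < h" "h < d" "a \<le> s - h"
    using \<open>0 < d\<close> \<open>a < s\<close> by (auto simp: h_def)
  then show False
    using d[of h] neg[of "s - h"] \<open>u s = 0\<close> by auto
qed

lemma nonpos_if_neg_before:
  fixes u :: "real \<Rightarrow> real"
  assumes "a < s" "continuous_on {a..s} u" "\<And>t. a \<le> t \<Longrightarrow> t < s \<Longrightarrow> u t < 0"
  shows "u s \<le> 0"
proof -
  have "closed {t \<in> {a..s}. u t \<le> (\<lambda>t. 0) t}"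
    using assms(2) by (intro continuous_on_closed_Collect_le continuous_on_const) auto
  moreover have "{a..<s} \<subseteq> {t \<in> {a..s}. u t \<le> 0}"
    using assms(3) by (fastforce intro: less_imp_le)
  ultimately have "closure {a..<s} \<subseteq> {t \<in> {a..s}. u t \<le> 0}"
    by (intro closure_minimal) auto
  moreover have "s \<in> closure {a..<s}"
    using assms(1) by simp
  ultimately show ?thesis
    by blast
qed

lemma first_crossing:
  fixes u :: "'i \<Rightarrow> real \<Rightarrow> real"
  assumes "finite I"
    and cont: "\<And>k. k \<in> I \<Longrightarrow> continuous_on {a..b} (u k)"
    and outside: "\<And>k t. k \<notin> I \<Longrightarrow> t \<in> {a..b} \<Longrightarrow> u k t < 0"
    and start: "\<And>k. u k a < 0"
    and t1: "t1 \<in> {a..b}" "0 \<le> u i t1"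
  obtains s k where "a < s" "s \<le> b" "u k s = 0" "\<And>k. u k s \<le> 0"
    "\<And>k t. a \<le> t \<Longrightarrow> t < s \<Longrightarrow> u k t < 0"
proof -
  define S where "S = {t \<in> {a..b}. \<exists>k\<in>I. 0 \<le> u k t}"
  have "i \<in> I"
    using outside t1 by force
  then have "t1 \<in> S"
    using t1 by (auto simp: S_def)
  have "S = (\<Union>k\<in>I. {t \<in> {a..b}. (\<lambda>t. 0) t \<le> u k t})"
    by (auto simp: S_def)
  also have "closed \<dots>"
    by (intro closed_UN ballI assms(1) continuous_on_closed_Collect_le cont continuous_on_const
        closed_atLeastAtMost)
  finally have "closed S" .
  have "bdd_below S"
    by (auto simp: S_def intro: bdd_belowI[of _ a])
  define s where "s = Inf S"
  have "s \<in> S"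
    using closed_contains_Inf[OF _ \<open>bdd_below S\<close> \<open>closed S\<close>] \<open>t1 \<in> S\<close> by (auto simp: s_def)
  have before: "u k t < 0" if "a \<le> t" "t < s" for k t
  proof (cases "k \<in> I")
    case True
    have "t \<notin> S"
      using cInf_lower[OF _ \<open>bdd_below S\<close>] that(2) by (force simp: s_def)
    moreover have "t \<in> {a..b}"
      using \<open>s \<in> S\<close> that by (auto simp: S_def)
    ultimately show ?thesis
      using True by (force simp: S_def)
  qed (use outside that \<open>s \<in> S\<close> in \<open>auto simp: S_def\<close>)
  have "a < s"
  proof (rule ccontr)
    assume "\<not> a < s"
    then have "s = a"
      using \<open>s \<in> S\<close> by (auto simp: S_def)
    then obtain k where "0 \<le> u k a"
      using \<open>s \<in> S\<close> by (auto simp: S_def)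
    with start[of k] show False
      by linarith
  qed
  have at_s: "u k s \<le> 0" for k
  proof (cases "k \<in> I")
    case True
    have "continuous_on {a..s} (u k)"
      using cont[OF True] by (rule continuous_on_subset) (use \<open>s \<in> S\<close> in \<open>auto simp: S_def\<close>)
    then show ?thesis
      using nonpos_if_neg_before[OF \<open>a < s\<close>] before by blast
  qed (use outside \<open>s \<in> S\<close> in \<open>force simp: S_def\<close>)
  obtain k where "0 \<le> u k s"
    using \<open>s \<in> S\<close> by (auto simp: S_def)
  with at_s[of k] have "u k s = 0"
    by linarith
  then show thesis
    using that \<open>a < s\<close> \<open>s \<in> S\<close> at_s before by (auto simp: S_def)
qed

lemma barrier_first_touch:
  fixes u :: "'i \<Rightarrow> real \<Rightarrow> real" and w :: "'i \<Rightarrow> real" and E :: "real \<Rightarrow> real"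
  assumes w_ge_1: "\<And>i. 1 \<le> w i" and w_finite: "\<And>r. finite {i. w i \<le> r}"
    and cont: "\<And>i. continuous_on {a..b} (u i)"
    and bounded: "\<And>i t. t \<in> {a..b} \<Longrightarrow> u i t \<le> R"
    and init: "\<And>i. u i a \<le> 0"
    and E: "continuous_on {a..b} E" "\<And>t. t \<in> {a..b} \<Longrightarrow> 1 \<le> E t" and "0 < \<epsilon>"
    and t: "t \<in> {a..b}" "\<epsilon> * w i * E t \<le> u i t"
  obtains s k where "a < s" "s \<le> b" "u k s = \<epsilon> * w k * E s" "\<And>k. u k s \<le> \<epsilon> * w k * E s"
    "\<And>k r. a \<le> r \<Longrightarrow> r < s \<Longrightarrow> u k r < \<epsilon> * w k * E r"
proof -
  define \<phi> where "\<phi> k s = u k s - \<epsilon> * w k * E s" for k s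
  have barrier_ge: "\<epsilon> * w k \<le> \<epsilon> * w k * E s" "0 < \<epsilon> * w k" if "s \<in> {a..b}" for k s
    using mult_left_mono[OF E(2)[OF that], of "\<epsilon> * w k"] \<open>0 < \<epsilon>\<close> w_ge_1[of k] by simp_all
  have outside: "\<phi> k s < 0" if "k \<notin> {k. w k \<le> R / \<epsilon>}" "s \<in> {a..b}" for k s
  proof -
    have "R < \<epsilon> * w k"
      using that(1) \<open>0 < \<epsilon>\<close> by (simp add: field_simps)
    then show ?thesis
      using barrier_ge[OF that(2), of k] bounded[OF that(2), of k] by (simp add: \<phi>_def)
  qed
  have "a \<in> {a..b}"
    using t(1) by simp
  then have "\<phi> k a < 0" for k
    using init[of k] barrier_ge[of a k] by (simp add: \<phi>_def)
  moreover have "continuous_on {a..b} (\<phi> k)" for k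
    unfolding \<phi>_def by (intro continuous_intros cont E(1))
  moreover have "0 \<le> \<phi> i t"
    using t(2) by (simp add: \<phi>_def)
  ultimately obtain s k where "a < s" "s \<le> b" "\<phi> k s = 0" "\<And>k. \<phi> k s \<le> 0"
    "\<And>k r. a \<le> r \<Longrightarrow> r < s \<Longrightarrow> \<phi> k r < 0"
    using first_crossing[where u = \<phi>, OF w_finite _ outside _ t(1)] by blast
  then show thesis
    by (intro that[of s k]) (auto simp: \<phi>_def)
qed

lemma weighted_comparison:
  fixes u :: "'i \<Rightarrow> real \<Rightarrow> real" and w :: "'i \<Rightarrow> real" and nb :: "'i \<Rightarrow> 'i set"
  assumes "0 \<le> K"
    and w_ge_1: "\<And>i. 1 \<le> w i"
    and w_nb: "\<And>i. (\<Sum>k\<in>nb i. w k) \<le> c * w i"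
    and w_finite: "\<And>r. finite {i. w i \<le> r}"
    and cont: "\<And>i. continuous_on {a..b} (u i)"
    and bounded: "\<And>i t. t \<in> {a..b} \<Longrightarrow> u i t \<le> R"
    and init: "\<And>i. u i a \<le> 0"
    and deriv: "\<And>i t. a < t \<Longrightarrow> t \<le> b \<Longrightarrow> 0 < u i t \<Longrightarrow>
      \<exists>D. (u i has_real_derivative D) (at t) \<and> D \<le> K * (u i t + (\<Sum>k\<in>nb i. max 0 (u k t)))"
    and t: "t \<in> {a..b}"
  shows "u i t \<le> 0"
proof (rule ccontr)
  assume "\<not> u i t \<le> 0"
  have "0 \<le> c * w i"
    using w_nb[of i] sum_nonneg[of "nb i" w] w_ge_1 by (smt (verit))
  then have "0 \<le> c"
    using w_ge_1[of i] by (simp add: zero_le_mult_iff)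
  \<comment> \<open>\<open>\<Lambda>\<close> exceeds the growth rate \<open>K (1 + c)\<close> that the neighbours can force, so the
    barrier \<open>\<epsilon> w i exp (\<Lambda> (s - a))\<close> is never touched.\<close>
  define \<Lambda> where "\<Lambda> = K * (1 + c) + 1"
  define E where "E s = exp (\<Lambda> * (s - a))" for s
  define \<epsilon> where "\<epsilon> = u i t / (2 * w i * E t)"
  have "0 < \<Lambda>"
    using mult_nonneg_nonneg[OF \<open>0 \<le> K\<close>, of "1 + c"] \<open>0 \<le> c\<close> by (simp add: \<Lambda>_def)
  then have E_ge_1: "1 \<le> E s" if "s \<in> {a..b}" for s
    using that by (simp add: E_def)
  have "0 < \<epsilon>"
    using \<open>\<not> u i t \<le> 0\<close> w_ge_1[of i] E_ge_1[OF t] by (simp add: \<epsilon>_def)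
  have "\<epsilon> * w i * E t \<le> u i t"
    using \<open>\<not> u i t \<le> 0\<close> w_ge_1[of i] E_ge_1[OF t] by (simp add: \<epsilon>_def)
  moreover have "continuous_on {a..b} E"
    unfolding E_def by (intro continuous_intros)
  ultimately obtain s k where "a < s" "s \<le> b" and touch: "u k s = \<epsilon> * w k * E s"
    and below: "\<And>k. u k s \<le> \<epsilon> * w k * E s"
    and before: "\<And>k r. a \<le> r \<Longrightarrow> r < s \<Longrightarrow> u k r < \<epsilon> * w k * E r"
    using barrier_first_touch[where u = u and w = w and E = E and i = i and t = t and R = R,
        OF w_ge_1 w_finite cont bounded init _ E_ge_1 \<open>0 < \<epsilon>\<close> t] by blast
  define q where "q = \<epsilon> * E s"
  have "0 < q"
    using \<open>0 < \<epsilon>\<close> E_ge_1[of s] \<open>a < s\<close> \<open>s \<le> b\<close> by (simp add: q_def)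
  have "u k s = q * w k"
    using touch by (simp add: q_def mult_ac)
  then have "0 < u k s"
    using \<open>0 < q\<close> w_ge_1[of k] by simp
  then obtain D where D: "(u k has_real_derivative D) (at s)"
    and D_le: "D \<le> K * (u k s + (\<Sum>k'\<in>nb k. max 0 (u k' s)))"
    using deriv[OF \<open>a < s\<close> \<open>s \<le> b\<close>] by blast
  have "(\<Sum>k'\<in>nb k. max 0 (u k' s)) \<le> (\<Sum>k'\<in>nb k. q * w k')"
  proof (rule sum_mono)
    fix k'
    have "0 \<le> q * w k'"
      using \<open>0 < q\<close> w_ge_1[of k'] by simp
    then show "max 0 (u k' s) \<le> q * w k'"
      using below[of k'] by (simp add: q_def mult_ac)
  qed
  also have "\<dots> \<le> q * (c * w k)"
    using w_nb[of k] \<open>0 < q\<close> by (simp add: sum_distrib_left[symmetric])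
  finally have "D \<le> K * (1 + c) * (q * w k)"
    using D_le \<open>u k s = q * w k\<close> \<open>0 \<le> K\<close> mult_left_mono by (fastforce simp: algebra_simps)
  moreover have "((\<lambda>r. u k r - \<epsilon> * w k * E r) has_real_derivative D - \<Lambda> * (q * w k)) (at s)"
    unfolding E_def q_def using D by (auto intro!: derivative_eq_intros simp: E_def algebra_simps)
  then have "0 \<le> D - \<Lambda> * (q * w k)"
    by (rule deriv_nonneg_at_first_zero[OF \<open>a < s\<close>]) (use touch before in auto)
  moreover have "0 < q * w k"
    using \<open>0 < q\<close> w_ge_1[of k] by simp
  ultimately show False
    by (simp add: \<Lambda>_def algebra_simps)
qed

lemma staggered_comparison:
  fixes x y :: "int \<Rightarrow> real \<Rightarrow> real"
  assumes "0 \<le> K"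
    and cont: "\<And>j. continuous_on {a..b} (x j)" "\<And>j. continuous_on {a..b} (y j)"
    and bounded: "\<And>j t. t \<in> {a..b} \<Longrightarrow> x j t \<le> R" "\<And>j t. t \<in> {a..b} \<Longrightarrow> y j t \<le> R"
    and init: "\<And>j. x j a \<le> 0" "\<And>j. y j a \<le> 0"
    and dx: "\<And>j t. a < t \<Longrightarrow> t \<le> b \<Longrightarrow> 0 < x j t \<Longrightarrow> \<exists>D. (x j has_real_derivative D) (at t) \<and>
      D \<le> K * (x j t + max 0 (y j t) + max 0 (y (j + 1) t))"
    and dy: "\<And>j t. a < t \<Longrightarrow> t \<le> b \<Longrightarrow> 0 < y j t \<Longrightarrow> \<exists>D. (y j has_real_derivative D) (at t) \<and>
      D \<le> K * (y j t + max 0 (x j t) + max 0 (x (j - 1) t))"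
    and "t \<in> {a..b}"
  shows "x j t \<le> 0 \<and> y j t \<le> 0"
proof -
  define u where "u = case_sum x y"
  define nb :: "int + int \<Rightarrow> (int + int) set"
    where "nb = case_sum (\<lambda>j. {Inr j, Inr (j + 1)}) (\<lambda>j. {Inl j, Inl (j - 1)})"
  define g where "g j = 1 + \<bar>real_of_int j\<bar>" for j
  define w where "w = case_sum g g"
  have g_finite: "finite {j. g j \<le> r}" for r
  proof (rule finite_subset)
    show "{j. g j \<le> r} \<subseteq> {-\<lceil>r\<rceil>..\<lceil>r\<rceil>}"
      by (auto simp: g_def abs_le_iff) linarith+
  qed simp
  have "u i t \<le> 0" for i
  proof (rule weighted_comparison[where u = u and a = a and b = b and K = K and w = w and nb = nb
        and c = 3 and R = R])
    show "1 \<le> w i" for i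
      by (cases i) (auto simp: w_def g_def)
    show "(\<Sum>k\<in>nb i. w k) \<le> 3 * w i" for i
      by (cases i) (auto simp: nb_def w_def g_def)
    show "finite {i. w i \<le> r}" for r
    proof (rule finite_subset)
      show "{i. w i \<le> r} \<subseteq> Inl ` {j. g j \<le> r} \<union> Inr ` {j. g j \<le> r}"
      proof
        fix i assume "i \<in> {i. w i \<le> r}"
        then show "i \<in> Inl ` {j. g j \<le> r} \<union> Inr ` {j. g j \<le> r}"
          by (cases i) (auto simp: w_def)
      qed
    qed (use g_finite in auto)
    show "continuous_on {a..b} (u i)" for i
      using cont by (auto simp: u_def split: sum.splits)
    show "u i s \<le> R" if "s \<in> {a..b}" for i s
      using bounded that by (auto simp: u_def split: sum.splits)
    show "u i a \<le> 0" for i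
      using init by (auto simp: u_def split: sum.splits)
    show "\<exists>D. (u i has_real_derivative D) (at t) \<and> D \<le> K * (u i t + (\<Sum>k\<in>nb i. max 0 (u k t)))"
      if "a < t" "t \<le> b" "0 < u i t" for i t
      using dx[OF that(1,2)] dy[OF that(1,2)] that(3) by (cases i) (auto simp: u_def nb_def add.assoc[symmetric])
  qed (use assms in auto)
  from this[of "Inl j"] this[of "Inr j"] show ?thesis
    by (simp add: u_def)
qed

lemma exp_weighted_mono:
  fixes u :: "real \<Rightarrow> real"
  assumes "s \<le> t" "continuous_on {s..t} u"
    and "\<And>r. s < r \<Longrightarrow> r < t \<Longrightarrow> \<exists>D. (u has_real_derivative D) (at r) \<and> -c * u r \<le> D"
  shows "exp (c * s) * u s \<le> exp (c * t) * u t"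
proof (rule DERIV_nonneg_imp_increasing_open[OF assms(1)])
  fix r assume "s < r" "r < t"
  then obtain D where "(u has_real_derivative D) (at r)" "-c * u r \<le> D"
    using assms(3) by blast
  then have "((\<lambda>r. exp (c * r) * u r) has_real_derivative exp (c * r) * (c * u r + D)) (at r)"
    by (auto intro!: derivative_eq_intros simp: algebra_simps)
  moreover have "0 \<le> exp (c * r) * (c * u r + D)"
    using \<open>-c * u r \<le> D\<close> by simp
  ultimately show "\<exists>y. ((\<lambda>r. exp (c * r) * u r) has_real_derivative y) (at r) \<and> 0 \<le> y"
    by blast
qed (use assms(2) in \<open>intro continuous_intros\<close>)

lemma exp_weighted_strict_mono:
  fixes u :: "real \<Rightarrow> real"
  assumes "s < t" "continuous_on {s..t} u"
    and "\<And>r. s < r \<Longrightarrow> r < t \<Longrightarrow> \<exists>D. (u has_real_derivative D) (at r) \<and> -c * u r < D"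
  shows "exp (c * s) * u s < exp (c * t) * u t"
proof (rule DERIV_pos_imp_increasing_open[OF assms(1)])
  fix r assume "s < r" "r < t"
  then obtain D where "(u has_real_derivative D) (at r)" "-c * u r < D"
    using assms(3) by blast
  then have "((\<lambda>r. exp (c * r) * u r) has_real_derivative exp (c * r) * (c * u r + D)) (at r)"
    by (auto intro!: derivative_eq_intros simp: algebra_simps)
  moreover have "0 < exp (c * r) * (c * u r + D)"
    using \<open>-c * u r < D\<close> by simp
  ultimately show "\<exists>y. ((\<lambda>r. exp (c * r) * u r) has_real_derivative y) (at r) \<and> 0 < y"
    by blast
qed (use assms(2) in \<open>intro continuous_intros\<close>)

lemma linear_coupling_le:
  fixes K b c x y z :: real
  assumes "0 < x" "c \<le> K" "0 \<le> b" "b \<le> K"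
  shows "c * x + b * (y + z) \<le> K * (x + max 0 y + max 0 z)"
proof -
  have "c * x \<le> K * x"
    using assms(1,2) by (simp add: mult_right_mono)
  moreover have b_le: "b * v \<le> K * max 0 v" for v
    using assms(3,4) mult_mono[of b K v "max 0 v"] mult_left_mono[of v "max 0 v" b] by force
  ultimately show ?thesis
    using b_le[of y] b_le[of z] by (simp add: algebra_simps)
qed

lemma kpp_zero: "kpp_nonlinearity f \<Longrightarrow> f 0 = 0"
  by (simp add: kpp_nonlinearity_def)

lemma kpp_pos: "kpp_nonlinearity f \<Longrightarrow> 0 < u \<Longrightarrow> u < 1 \<Longrightarrow> 0 < f u"
  by (force simp: kpp_nonlinearity_def)

lemma kpp_neg: "kpp_nonlinearity f \<Longrightarrow> 1 < u \<Longrightarrow> f u < 0"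
  by (simp add: kpp_nonlinearity_def)

lemma kpp_lipschitz:
  assumes "kpp_nonlinearity f"
  obtains L where "L-lipschitz_on {-R..R} f"
proof -
  have "\<exists>L. \<forall>x y. \<bar>x\<bar> \<le> R \<longrightarrow> \<bar>y\<bar> \<le> R \<longrightarrow> \<bar>f x - f y\<bar> \<le> L * \<bar>x - y\<bar>"
    using assms by (simp add: kpp_nonlinearity_def)
  then obtain L where L: "\<And>x y. \<bar>x\<bar> \<le> R \<Longrightarrow> \<bar>y\<bar> \<le> R \<Longrightarrow> \<bar>f x - f y\<bar> \<le> L * \<bar>x - y\<bar>"
    by blast
  have "(max L 0)-lipschitz_on {-R..R} f"
  proof (rule lipschitz_onI)
    fix x y assume "x \<in> {-R..R}" "y \<in> {-R..R}"
    then have "\<bar>f x - f y\<bar> \<le> L * \<bar>x - y\<bar>"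
      by (intro L) auto
    also have "\<dots> \<le> max L 0 * \<bar>x - y\<bar>"
      by (intro mult_right_mono) auto
    finally show "dist (f x) (f y) \<le> max L 0 * dist x y"
      by (simp add: dist_real_def)
  qed simp
  then show thesis
    by (rule that)
qed

lemma kpp_continuous:
  assumes "kpp_nonlinearity f"
  shows "continuous_on S f"
proof -
  have "isCont f x" for x
  proof -
    obtain L where "L-lipschitz_on {-(\<bar>x\<bar> + 1)..\<bar>x\<bar> + 1} f"
      using kpp_lipschitz[OF assms] .
    then show ?thesis
      by (rule continuous_on_interior[OF lipschitz_on_continuous_on]) auto
  qed
  then show ?thesis
    by (simp add: continuous_at_imp_continuous_on)
qed

lemma kpp_neg_bound:
  assumes "kpp_nonlinearity f" "1 < b"
  obtains m where "0 < m" "\<And>u. u \<in> {b..K} \<Longrightarrow> f u \<le> -m"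
proof (cases "b \<le> K")
  case True
  then obtain u0 where "u0 \<in> {b..K}" and max: "\<And>u. u \<in> {b..K} \<Longrightarrow> f u \<le> f u0"
    using continuous_attains_sup[of "{b..K}" f] kpp_continuous[OF assms(1)] by auto
  moreover have "f u0 < 0"
    using kpp_neg[OF assms(1)] \<open>u0 \<in> {b..K}\<close> \<open>1 < b\<close> by auto
  ultimately show thesis
    using that[of "- f u0"] by auto
qed (use that[of 1] in auto)

lemma kpp_lower_near_zero:
  assumes "kpp_nonlinearity f"
  obtains r \<delta> where "0 < r" "0 < \<delta>" "\<And>u. 0 < u \<Longrightarrow> u < \<delta> \<Longrightarrow> r * u \<le> f u"
proof -
  obtain f' :: "real \<Rightarrow> real"
    where "\<forall>u\<in>{0..1}. (f has_real_derivative f' u) (at u within {0..1})"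
      and bound: "\<forall>u\<in>{0<..<1}. 0 < f u \<and> f u \<le> f' 0 * u"
    using assms unfolding kpp_nonlinearity_def by blast
  then have der: "(f has_real_derivative f' 0) (at 0 within {0..1})"
    by simp
  define d where "d = f' 0"
  have "0 < d"
    using bound by (force simp: d_def dest: bspec[of _ _ "1/2"])
  have "((\<lambda>u. (f u - f 0) / (u - 0)) \<longlongrightarrow> d) (at 0 within {0..1})"
    using der by (simp add: d_def has_field_derivative_iff)
  then have "\<forall>\<^sub>F u in at 0 within {0..1}. d / 2 < f u / u"
    using kpp_zero[OF assms] \<open>0 < d\<close> by (auto dest: order_tendstoD(1)[where a = "d / 2"])
  then obtain \<delta> where "0 < \<delta>" and \<delta>: "\<And>u. u \<in> {0..1} \<Longrightarrow> u \<noteq> 0 \<Longrightarrow> dist u 0 < \<delta> \<Longrightarrow> d / 2 < f u / u"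
    by (auto simp: eventually_at)
  show thesis
  proof (rule that[of "d / 2" "min \<delta> 1"])
    fix u :: real assume "0 < u" "u < min \<delta> 1"
    then have "d / 2 < f u / u"
      by (intro \<delta>) auto
    then show "d / 2 * u \<le> f u"
      using \<open>0 < u\<close> by (simp add: field_simps)
  qed (use \<open>0 < d\<close> \<open>0 < \<delta>\<close> in auto)
qed

lemma kpp_linear_lower_bound:
  assumes "kpp_nonlinearity f" "k < 1"
  obtains r where "0 < r" "\<And>u. 0 < u \<Longrightarrow> u \<le> k \<Longrightarrow> r * u \<le> f u"
proof -
  obtain r0 \<delta> where "0 < r0" "0 < \<delta>" and near_zero: "\<And>u. 0 < u \<Longrightarrow> u < \<delta> \<Longrightarrow> r0 * u \<le> f u"
    using kpp_lower_near_zero[OF assms(1)] by blast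
  \<comment> \<open>\<open>{\<delta>..k}\<close> may be empty\<close>
  obtain u0 where "u0 \<in> {\<delta>..k} \<or> k < \<delta>" and min: "\<And>u. u \<in> {\<delta>..k} \<Longrightarrow> f u0 \<le> f u"
    using continuous_attains_inf[of "{\<delta>..k}" f] kpp_continuous[OF assms(1)] by fastforce
  define r where "r = (if k < \<delta> then r0 else min r0 (f u0))"
  have "0 < r"
    using \<open>0 < r0\<close> \<open>0 < \<delta>\<close> kpp_pos[OF assms(1), of u0] \<open>u0 \<in> {\<delta>..k} \<or> k < \<delta>\<close> assms(2)
    by (auto simp: r_def)
  moreover have "r * u \<le> f u" if "0 < u" "u \<le> k" for u
  proof (cases "u < \<delta>")
    case True
    then have "r * u \<le> r0 * u"
      using that by (intro mult_right_mono) (auto simp: r_def)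
    then show ?thesis
      using near_zero[OF \<open>0 < u\<close> True] by linarith
  next
    case False
    then have "r * u \<le> f u0 * u"
      using that by (intro mult_right_mono) (auto simp: r_def)
    also have "\<dots> \<le> f u0"
      using \<open>0 < r\<close> that assms(2) False \<open>0 < \<delta>\<close>
        kpp_pos[OF assms(1), of u0] \<open>u0 \<in> {\<delta>..k} \<or> k < \<delta>\<close> by (auto intro: mult_left_le)
    also have "\<dots> \<le> f u"
      using min[of u] that False by auto
    finally show ?thesis .
  qed
  ultimately show thesis
    using that by blast
qed

lemma cos_ge_one_minus_sq: "1 - x^2 / 2 \<le> cos (x :: real)"
proof -
  have "\<bar>sin (x / 2)\<bar>^2 \<le> \<bar>x / 2\<bar>^2"
    by (intro power_mono abs_sin_x_le_abs_x) auto
  then have "sin (x / 2)^2 \<le> x^2 / 4"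
    by (simp add: power_divide)
  moreover have "cos x = 1 - 2 * sin (x / 2)^2"
    using cos_double_sin[of "x / 2"] by simp
  ultimately show ?thesis
    by linarith
qed

lemma cos_ge_one_minus_abs:
  fixes y :: real
  assumes "\<bar>y\<bar> \<le> \<delta>" "\<delta> \<le> 1"
  shows "1 - \<delta> \<le> cos y"
proof -
  have "y^2 \<le> \<delta>^2"
    using power_mono[OF assms(1) abs_ge_zero, of 2] by simp
  also have "\<dots> \<le> \<delta>"
    using assms by (simp add: power2_eq_square mult_left_le)
  finally show ?thesis
    using cos_ge_one_minus_sq[of y] assms(1) by linarith
qed

definition cos_bump :: "real \<Rightarrow> real \<Rightarrow> real" where
  "cos_bump \<theta> x = (if \<theta> * \<bar>x\<bar> \<le> pi / 2 then cos (\<theta> * x) else 0)"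

lemma cos_bump_nonneg:
  assumes "0 \<le> \<theta>"
  shows "0 \<le> cos_bump \<theta> x"
proof -
  have "\<bar>\<theta> * x\<bar> = \<theta> * \<bar>x\<bar>"
    using assms by (simp add: abs_mult)
  then show ?thesis
    by (auto simp: cos_bump_def abs_le_iff intro!: cos_ge_zero)
qed

lemma cos_bump_le_one: "cos_bump \<theta> x \<le> 1"
  by (simp add: cos_bump_def)

lemma cos_bump_ge:
  assumes "0 \<le> \<theta>" "\<theta> * \<bar>x\<bar> \<le> \<delta>" "\<delta> \<le> 1"
  shows "1 - \<delta> \<le> cos_bump \<theta> x"
proof -
  have "\<theta> * \<bar>x\<bar> \<le> pi / 2"
    using assms(2,3) pi_gt3 by linarith
  then show ?thesis
    using cos_ge_one_minus_abs[of "\<theta> * x" \<delta>] assms by (simp add: cos_bump_def abs_mult)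
qed

lemma cos_le_cos_bump:
  assumes "0 \<le> \<theta>" "\<theta> * \<bar>x\<bar> \<le> pi"
  shows "cos (\<theta> * x) \<le> cos_bump \<theta> x"
proof (cases "\<theta> * \<bar>x\<bar> \<le> pi / 2")
  case False
  have "cos (\<theta> * x) = cos (\<theta> * \<bar>x\<bar>)"
    by (cases "0 \<le> x") simp_all
  also have "\<dots> = - cos (pi - \<theta> * \<bar>x\<bar>)"
    by (simp add: cos_diff)
  also have "\<dots> \<le> 0"
    using False assms(2) cos_ge_zero[of "pi - \<theta> * \<bar>x\<bar>"] by linarith
  finally show ?thesis
    using cos_bump_nonneg[OF assms(1), of x] by linarith
qed (simp add: cos_bump_def)

text \<open>Cutting the cosine off at its zeros only raises the neighbouring values, so the
  eigenvalue relation of the discrete Laplacian survives as an inequality.\<close>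

lemma cos_bump_midpoint:
  assumes "0 \<le> \<theta>" "0 \<le> h" "\<theta> * h \<le> pi / 2"
  shows "2 * cos (\<theta> * h) * cos_bump \<theta> x \<le> cos_bump \<theta> (x - h) + cos_bump \<theta> (x + h)"
proof (cases "\<theta> * \<bar>x\<bar> \<le> pi / 2")
  case True
  have "\<theta> * \<bar>x - h\<bar> \<le> pi" "\<theta> * \<bar>x + h\<bar> \<le> pi"
    using True assms mult_left_mono[OF abs_triangle_ineq4[of x h] assms(1)]
      mult_left_mono[OF abs_triangle_ineq[of x h] assms(1)] by (auto simp: distrib_left)
  then have "cos (\<theta> * (x - h)) + cos (\<theta> * (x + h)) \<le> cos_bump \<theta> (x - h) + cos_bump \<theta> (x + h)"
    using cos_le_cos_bump[OF assms(1)] by (simp add: add_mono)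
  moreover have "cos (\<theta> * (x - h)) + cos (\<theta> * (x + h)) = 2 * cos (\<theta> * h) * cos (\<theta> * x)"
    by (simp add: algebra_simps cos_add cos_diff)
  ultimately show ?thesis
    using True by (simp add: cos_bump_def)
next
  case False
  then show ?thesis
    using cos_bump_nonneg[OF assms(1)] by (simp add: cos_bump_def)
qed

lemma logistic_curve:
  fixes k \<kappa>0 \<mu> t0 :: real
  assumes "0 < \<kappa>0" "\<kappa>0 \<le> k" "0 < \<mu>"
  obtains \<kappa> \<kappa>' where "\<And>t. (\<kappa> has_real_derivative \<kappa>' t) (at t)" "\<And>t. 0 < \<kappa> t" "\<And>t. \<kappa> t \<le> k"
    "\<And>t. \<kappa>' t \<le> \<mu> * \<kappa> t" "\<kappa> t0 = \<kappa>0" "(\<kappa> \<longlongrightarrow> k) at_top"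
proof -
  define C where "C = k / \<kappa>0 - 1"
  define q where "q t = C * exp (- \<mu> * (t - t0))" for t
  define \<kappa> where "\<kappa> t = k / (1 + q t)" for t
  define \<kappa>' where "\<kappa>' t = \<mu> * \<kappa> t * (q t / (1 + q t))" for t
  have "0 \<le> C"
    using assms(1,2) by (simp add: C_def field_simps)
  then have q: "0 \<le> q t" for t
    by (simp add: q_def)
  have "0 < k"
    using assms(1,2) by linarith
  show thesis
  proof (rule that[of \<kappa> \<kappa>'])
    show "(\<kappa> has_real_derivative \<kappa>' t) (at t)" for t
    proof (rule DERIV_cong)
      have "(q has_real_derivative - \<mu> * q t) (at t)"
        unfolding q_def by (auto intro!: derivative_eq_intros)
      then show "(\<kappa> has_real_derivative - (k * (- \<mu> * q t)) / (1 + q t)^2) (at t)"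
        unfolding \<kappa>_def using q[of t] by (auto intro!: derivative_eq_intros simp: power2_eq_square)
      show "- (k * (- \<mu> * q t)) / (1 + q t)^2 = \<kappa>' t"
        by (simp add: \<kappa>'_def \<kappa>_def power2_eq_square)
    qed
    show "0 < \<kappa> t" for t
      using q[of t] \<open>0 < k\<close> by (simp add: \<kappa>_def)
    show "\<kappa> t \<le> k" for t
      using q[of t] \<open>0 < k\<close> by (simp add: \<kappa>_def field_simps)
    show "\<kappa>' t \<le> \<mu> * \<kappa> t" for t
      unfolding \<kappa>'_def by (rule mult_left_le) (use q[of t] \<open>0 < k\<close> assms(3) in \<open>auto simp: \<kappa>_def\<close>)
    show "\<kappa> t0 = \<kappa>0"
      using assms(1) \<open>0 < k\<close> by (simp add: \<kappa>_def q_def C_def)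
    show "(\<kappa> \<longlongrightarrow> k) at_top"
      unfolding \<kappa>_def q_def using assms(3) by real_asymp
  qed
qed

locale kpp_lattice =
  fixes \<alpha> \<beta> :: real and f :: "real \<Rightarrow> real"
  assumes alpha_pos: "0 < \<alpha>" and beta_pos: "0 < \<beta>" and kpp: "kpp_nonlinearity f"
begin

definition rhs_V :: "(int \<Rightarrow> real \<Rightarrow> real) \<Rightarrow> (int \<Rightarrow> real \<Rightarrow> real) \<Rightarrow> int \<Rightarrow> real \<Rightarrow> real" where
  "rhs_V v p j t = -2 * \<alpha> * v j t + \<beta> * (p j t + p (j + 1) t)"

definition rhs_P :: "(int \<Rightarrow> real \<Rightarrow> real) \<Rightarrow> (int \<Rightarrow> real \<Rightarrow> real) \<Rightarrow> int \<Rightarrow> real \<Rightarrow> real" where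
  "rhs_P v p j t = f (p j t) + \<alpha> * (v j t + v (j - 1) t) - 2 * \<beta> * p j t"

definition admissible :: "real \<Rightarrow> (int \<Rightarrow> real \<Rightarrow> real) \<Rightarrow> (int \<Rightarrow> real \<Rightarrow> real) \<Rightarrow> bool" where
  "admissible t0 v p \<longleftrightarrow>
     (\<forall>j. continuous_on {t0..} (v j) \<and> continuous_on {t0..} (p j)) \<and>
     (\<forall>T. \<exists>M. \<forall>j. \<forall>t\<in>{t0..T}. \<bar>v j t\<bar> \<le> M \<and> \<bar>p j t\<bar> \<le> M)"

definition sub_solution :: "real \<Rightarrow> (int \<Rightarrow> real \<Rightarrow> real) \<Rightarrow> (int \<Rightarrow> real \<Rightarrow> real) \<Rightarrow> bool" where
  "sub_solution t0 v p \<longleftrightarrow> admissible t0 v p \<and>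
     (\<forall>j t. t0 < t \<longrightarrow>
        (\<exists>D. (v j has_real_derivative D) (at t) \<and> D \<le> rhs_V v p j t) \<and>
        (\<exists>D. (p j has_real_derivative D) (at t) \<and> D \<le> rhs_P v p j t))"

definition super_solution :: "real \<Rightarrow> (int \<Rightarrow> real \<Rightarrow> real) \<Rightarrow> (int \<Rightarrow> real \<Rightarrow> real) \<Rightarrow> bool" where
  "super_solution t0 v p \<longleftrightarrow> admissible t0 v p \<and>
     (\<forall>j t. t0 < t \<longrightarrow>
        (\<exists>D. (v j has_real_derivative D) (at t) \<and> rhs_V v p j t \<le> D) \<and>
        (\<exists>D. (p j has_real_derivative D) (at t) \<and> rhs_P v p j t \<le> D))"

lemma admissible_bound:
  assumes "admissible t0 v p"
  obtains M where "\<And>j t. t \<in> {t0..T} \<Longrightarrow> \<bar>v j t\<bar> \<le> M \<and> \<bar>p j t\<bar> \<le> M"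
  using assms unfolding admissible_def by blast

lemma admissible_continuous:
  assumes "admissible t0 v p"
  shows "continuous_on {t0..T} (v j)" "continuous_on {t0..T} (p j)"
  using assms by (auto simp: admissible_def intro: continuous_on_subset)

lemma sub_solutionD:
  assumes "sub_solution t0 v p" "t0 < t"
  obtains Dv Dp where "(v j has_real_derivative Dv) (at t)" "Dv \<le> rhs_V v p j t"
    "(p j has_real_derivative Dp) (at t)" "Dp \<le> rhs_P v p j t"
  using assms unfolding sub_solution_def by blast

lemma super_solutionD:
  assumes "super_solution t0 v p" "t0 < t"
  obtains Dv Dp where "(v j has_real_derivative Dv) (at t)" "rhs_V v p j t \<le> Dv"
    "(p j has_real_derivative Dp) (at t)" "rhs_P v p j t \<le> Dp"
  using assms unfolding super_solution_def by blast

lemma V_difference_deriv_le: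
  assumes "sub_solution t0 v p" "super_solution t0 V P" "t0 < t" "0 < v j t - V j t" "0 \<le> L"
  shows "\<exists>D. ((\<lambda>s. v j s - V j s) has_real_derivative D) (at t) \<and> D \<le> (\<alpha> + \<beta> + L) *
    (v j t - V j t + max 0 (p j t - P j t) + max 0 (p (j + 1) t - P (j + 1) t))"
proof -
  obtain Dv DV where "(v j has_real_derivative Dv) (at t)" "(V j has_real_derivative DV) (at t)"
    and "Dv \<le> rhs_V v p j t" "rhs_V V P j t \<le> DV"
    using sub_solutionD[OF assms(1,3)] super_solutionD[OF assms(2,3)] by metis
  moreover have "rhs_V v p j t - rhs_V V P j t =
      (-2 * \<alpha>) * (v j t - V j t) + \<beta> * ((p j t - P j t) + (p (j + 1) t - P (j + 1) t))"
    by (simp add: rhs_V_def algebra_simps)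
  moreover have "\<dots> \<le> (\<alpha> + \<beta> + L) *
      (v j t - V j t + max 0 (p j t - P j t) + max 0 (p (j + 1) t - P (j + 1) t))"
    using assms(4,5) alpha_pos beta_pos by (intro linear_coupling_le) auto
  ultimately show ?thesis
    by (intro exI[of _ "Dv - DV"] conjI DERIV_diff) auto
qed

lemma P_difference_deriv_le:
  assumes "sub_solution t0 v p" "super_solution t0 V P" "t0 < t" "0 < p j t - P j t"
    and L: "L-lipschitz_on {-M..M} f" and "\<bar>p j t\<bar> \<le> M" "\<bar>P j t\<bar> \<le> M"
  shows "\<exists>D. ((\<lambda>s. p j s - P j s) has_real_derivative D) (at t) \<and> D \<le> (\<alpha> + \<beta> + L) *
    (p j t - P j t + max 0 (v j t - V j t) + max 0 (v (j - 1) t - V (j - 1) t))"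
proof -
  obtain Dp DP where "(p j has_real_derivative Dp) (at t)" "(P j has_real_derivative DP) (at t)"
    and "Dp \<le> rhs_P v p j t" "rhs_P V P j t \<le> DP"
    using sub_solutionD[OF assms(1,3)] super_solutionD[OF assms(2,3)] by metis
  moreover have "dist (f (p j t)) (f (P j t)) \<le> L * dist (p j t) (P j t)"
    by (rule lipschitz_onD[OF L]) (use assms(6,7) in auto)
  then have "rhs_P v p j t - rhs_P V P j t \<le>
      (L - 2 * \<beta>) * (p j t - P j t) + \<alpha> * ((v j t - V j t) + (v (j - 1) t - V (j - 1) t))"
    using assms(4) by (simp add: rhs_P_def dist_real_def algebra_simps)
  moreover have "\<dots> \<le> (\<alpha> + \<beta> + L) *
      (p j t - P j t + max 0 (v j t - V j t) + max 0 (v (j - 1) t - V (j - 1) t))"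
    using assms(4) alpha_pos beta_pos lipschitz_on_nonneg[OF L] by (intro linear_coupling_le) auto
  ultimately show ?thesis
    by (intro exI[of _ "Dp - DP"] conjI DERIV_diff) auto
qed

theorem comparison:
  assumes sub: "sub_solution t0 v p" and super: "super_solution t0 V P"
    and init: "\<And>j. v j t0 \<le> V j t0" "\<And>j. p j t0 \<le> P j t0" and "t0 \<le> t"
  shows "v j t \<le> V j t \<and> p j t \<le> P j t"
proof -
  have "admissible t0 v p" "admissible t0 V P"
    using sub super by (simp_all add: sub_solution_def super_solution_def)
  obtain M1 where M1: "\<And>j s. s \<in> {t0..t} \<Longrightarrow> \<bar>v j s\<bar> \<le> M1 \<and> \<bar>p j s\<bar> \<le> M1"
    using admissible_bound[OF \<open>admissible t0 v p\<close>] by blast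
  obtain M2 where M2: "\<And>j s. s \<in> {t0..t} \<Longrightarrow> \<bar>V j s\<bar> \<le> M2 \<and> \<bar>P j s\<bar> \<le> M2"
    using admissible_bound[OF \<open>admissible t0 V P\<close>] by blast
  define M where "M = max M1 M2"
  have M: "\<bar>v j s\<bar> \<le> M \<and> \<bar>p j s\<bar> \<le> M \<and> \<bar>V j s\<bar> \<le> M \<and> \<bar>P j s\<bar> \<le> M" if "s \<in> {t0..t}" for j s
    using M1[OF that, of j] M2[OF that, of j] by (auto simp: M_def)
  obtain L where L: "L-lipschitz_on {-M..M} f"
    using kpp_lipschitz[OF kpp] .
  have "0 \<le> L"
    using L by (rule lipschitz_on_nonneg)
  have "v j t - V j t \<le> 0 \<and> p j t - P j t \<le> 0"
  proof (rule staggered_comparison[where x = "\<lambda>j s. v j s - V j s" and y = "\<lambda>j s. p j s - P j s"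
        and K = "\<alpha> + \<beta> + L" and R = "2 * M" and a = t0 and b = t])
    show "\<exists>D. ((\<lambda>s. v j s - V j s) has_real_derivative D) (at s) \<and>
        D \<le> (\<alpha> + \<beta> + L) * (v j s - V j s + max 0 (p j s - P j s) + max 0 (p (j + 1) s - P (j + 1) s))"
      if "t0 < s" "s \<le> t" "0 < v j s - V j s" for j s
      using V_difference_deriv_le[OF sub super that(1,3) \<open>0 \<le> L\<close>] .
    show "\<exists>D. ((\<lambda>s. p j s - P j s) has_real_derivative D) (at s) \<and>
        D \<le> (\<alpha> + \<beta> + L) * (p j s - P j s + max 0 (v j s - V j s) + max 0 (v (j - 1) s - V (j - 1) s))"
      if "t0 < s" "s \<le> t" "0 < p j s - P j s" for j s
      using P_difference_deriv_le[OF sub super that(1,3) L] M[of s j] that(1,2) by simp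
    show "continuous_on {t0..t} (\<lambda>s. v j s - V j s)" "continuous_on {t0..t} (\<lambda>s. p j s - P j s)" for j
      using admissible_continuous[OF \<open>admissible t0 v p\<close>] admissible_continuous[OF \<open>admissible t0 V P\<close>]
      by (auto intro!: continuous_on_diff)
    show "v j s - V j s \<le> 2 * M" "p j s - P j s \<le> 2 * M" if "s \<in> {t0..t}" for j s
      using M[OF that, of j] by auto
  qed (use init \<open>t0 \<le> t\<close> alpha_pos beta_pos \<open>0 \<le> L\<close> in auto)
  then show ?thesis
    by simp
qed

lemma zero_sub_solution: "sub_solution t0 (\<lambda>_ _. 0) (\<lambda>_ _. 0)"
  by (auto simp: sub_solution_def admissible_def rhs_V_def rhs_P_def kpp_zero[OF kpp]
      intro!: exI[of _ 0])

lemma homogeneous_super_solution: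
  assumes A: "\<And>t. (A has_real_derivative A' t) (at t)"
    and B: "\<And>t. (B has_real_derivative B' t) (at t)"
    and A_ineq: "\<And>t. t0 < t \<Longrightarrow> -2 * \<alpha> * A t + 2 * \<beta> * B t \<le> A' t"
    and B_ineq: "\<And>t. t0 < t \<Longrightarrow> f (B t) + 2 * \<alpha> * A t - 2 * \<beta> * B t \<le> B' t"
  shows "super_solution t0 (\<lambda>j. A) (\<lambda>j. B)"
proof -
  have cont: "continuous_on S A" "continuous_on S B" for S
    using DERIV_isCont[OF A] DERIV_isCont[OF B] by (auto intro: continuous_at_imp_continuous_on)
  have "\<exists>M. \<forall>t\<in>{t0..T}. \<bar>A t\<bar> \<le> M \<and> \<bar>B t\<bar> \<le> M" for T
  proof -
    have "bounded ((\<lambda>t. \<bar>A t\<bar> + \<bar>B t\<bar>) ` {t0..T})"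
      by (intro compact_imp_bounded compact_continuous_image continuous_intros cont compact_Icc)
    then obtain M where "\<forall>t\<in>{t0..T}. \<bar>\<bar>A t\<bar> + \<bar>B t\<bar>\<bar> \<le> M"
      by (auto simp: bounded_real)
    then show ?thesis
      by (intro exI[of _ M]) force
  qed
  then have "admissible t0 (\<lambda>j. A) (\<lambda>j. B)"
    using cont by (auto simp: admissible_def)
  moreover have "rhs_V (\<lambda>j. A) (\<lambda>j. B) j t \<le> A' t" "rhs_P (\<lambda>j. A) (\<lambda>j. B) j t \<le> B' t"
    if "t0 < t" for j t
    using A_ineq[OF that] B_ineq[OF that] by (simp_all add: rhs_V_def rhs_P_def)
  ultimately show ?thesis
    using A B unfolding super_solution_def by blast
qed

lemma admissible_separable:
  fixes \<phi> \<psi> :: "int \<Rightarrow> real" and \<kappa> :: "real \<Rightarrow> real"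
  assumes "continuous_on {t0..} \<kappa>" "\<And>t. \<bar>\<kappa> t\<bar> \<le> k" "\<And>j. \<bar>\<phi> j\<bar> \<le> 1" "\<And>j. \<bar>\<psi> j\<bar> \<le> 1"
  shows "admissible t0 (\<lambda>j t. \<kappa> t * a * \<phi> j) (\<lambda>j t. \<kappa> t * \<psi> j)"
proof -
  have "0 \<le> k"
    using assms(2)[of t0] by linarith
  have "\<bar>\<kappa> t * a * \<phi> j\<bar> \<le> k * \<bar>a\<bar> + k \<and> \<bar>\<kappa> t * \<psi> j\<bar> \<le> k * \<bar>a\<bar> + k" for j t
  proof -
    have "\<bar>\<kappa> t * \<psi> j\<bar> \<le> k * 1"
      using mult_mono[OF assms(2) assms(4) \<open>0 \<le> k\<close> abs_ge_zero] by (simp add: abs_mult)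
    moreover have "\<bar>\<kappa> t * a * \<phi> j\<bar> \<le> k * \<bar>a\<bar> * 1"
      using mult_mono[of "\<bar>\<kappa> t\<bar> * \<bar>a\<bar>" "k * \<bar>a\<bar>" "\<bar>\<phi> j\<bar>" 1] assms(2,3) \<open>0 \<le> k\<close>
      by (simp add: abs_mult mult_right_mono)
    moreover have "0 \<le> k * \<bar>a\<bar>"
      using \<open>0 \<le> k\<close> by simp
    ultimately show ?thesis
      using \<open>0 \<le> k\<close> by linarith
  qed
  moreover have "continuous_on {t0..} (\<lambda>t. \<kappa> t * a * \<phi> j)" "continuous_on {t0..} (\<lambda>t. \<kappa> t * \<psi> j)" for j
    by (intro continuous_intros assms(1))+
  ultimately show ?thesis
    unfolding admissible_def by blast
qed

lemma profile_sub_solution: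
  fixes \<phi> \<psi> :: "int \<Rightarrow> real" and \<kappa> \<kappa>' :: "real \<Rightarrow> real"
  assumes \<phi>: "\<And>j. 0 \<le> \<phi> j" "\<And>j. \<phi> j \<le> 1" and \<psi>: "\<And>j. 0 \<le> \<psi> j" "\<And>j. \<psi> j \<le> 1"
    and \<phi>_mid: "\<And>j. 2 * c * \<phi> j \<le> \<psi> j + \<psi> (j + 1)"
    and \<psi>_mid: "\<And>j. 2 * c * \<psi> j \<le> \<phi> j + \<phi> (j - 1)"
    and \<kappa>: "\<And>t. (\<kappa> has_real_derivative \<kappa>' t) (at t)" "\<And>t. 0 < \<kappa> t" "\<And>t. \<kappa> t \<le> k"
      "\<And>t. \<kappa>' t \<le> \<mu> * \<kappa> t"
    and f_lower: "\<And>u. 0 < u \<Longrightarrow> u \<le> k \<Longrightarrow> r * u \<le> f u"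
    and "0 \<le> a"
    and rate_V: "\<mu> * a \<le> 2 * (\<beta> * c - \<alpha> * a)"
    and rate_P: "\<mu> + 2 * (\<beta> - \<alpha> * a * c) \<le> r"
  shows "sub_solution t0 (\<lambda>j t. \<kappa> t * a * \<phi> j) (\<lambda>j t. \<kappa> t * \<psi> j)"
proof -
  define v where "v j t = \<kappa> t * a * \<phi> j" for j t
  define p where "p j t = \<kappa> t * \<psi> j" for j t
  have cont: "continuous_on S \<kappa>" for S
    using DERIV_isCont[OF \<kappa>(1)] by (auto intro: continuous_at_imp_continuous_on)
  have p_range: "0 \<le> p j t" "p j t \<le> k" for j t
    using \<kappa>(2,3)[of t] \<psi>[of j] mult_mono[of "\<kappa> t" k "\<psi> j" 1] by (auto simp: p_def)
  have "admissible t0 v p"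
    unfolding v_def[abs_def] p_def[abs_def]
  proof (rule admissible_separable[OF cont])
    show "\<bar>\<kappa> t\<bar> \<le> k" "\<bar>\<phi> j\<bar> \<le> 1" "\<bar>\<psi> j\<bar> \<le> 1" for t j
      using \<kappa>(2,3)[of t] \<phi>[of j] \<psi>[of j] by simp_all
  qed
  moreover have "\<kappa>' t * a * \<phi> j \<le> rhs_V v p j t" for j t
  proof -
    have "\<kappa>' t * a * \<phi> j \<le> (\<mu> * \<kappa> t) * a * \<phi> j"
      using \<kappa>(4)[of t] \<phi>(1)[of j] \<open>0 \<le> a\<close> by (intro mult_right_mono) auto
    also have "\<dots> = \<kappa> t * \<phi> j * (\<mu> * a)"
      by (simp add: mult_ac)
    also have "\<dots> \<le> \<kappa> t * \<phi> j * (2 * (\<beta> * c - \<alpha> * a))"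
      using rate_V \<kappa>(2)[of t] \<phi>(1)[of j] by (intro mult_left_mono) auto
    also have "\<dots> \<le> -2 * \<alpha> * (\<kappa> t * a * \<phi> j) + \<beta> * \<kappa> t * (\<psi> j + \<psi> (j + 1))"
      using mult_left_mono[OF \<phi>_mid[of j], of "\<beta> * \<kappa> t"] beta_pos \<kappa>(2)[of t]
      by (simp add: algebra_simps)
    finally show ?thesis
      by (simp add: rhs_V_def v_def p_def algebra_simps)
  qed
  moreover have "\<kappa>' t * \<psi> j \<le> rhs_P v p j t" for j t
  proof -
    have "r * p j t \<le> f (p j t)"
      using f_lower[of "p j t"] p_range[of j t] kpp_zero[OF kpp] by (cases "p j t = 0") auto
    have "\<kappa>' t * \<psi> j \<le> (\<mu> * \<kappa> t) * \<psi> j"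
      using \<kappa>(4)[of t] \<psi>(1)[of j] by (rule mult_right_mono)
    also have "\<dots> = p j t * \<mu>"
      by (simp add: p_def mult_ac)
    also have "\<dots> \<le> p j t * (r - 2 * \<beta> + 2 * \<alpha> * a * c)"
      using rate_P p_range[of j t] by (intro mult_left_mono) auto
    also have "\<dots> \<le> f (p j t) - 2 * \<beta> * p j t + \<alpha> * \<kappa> t * a * (\<phi> j + \<phi> (j - 1))"
      using \<open>r * p j t \<le> f (p j t)\<close> mult_left_mono[OF \<psi>_mid[of j], of "\<alpha> * \<kappa> t * a"]
        alpha_pos \<kappa>(2)[of t] \<open>0 \<le> a\<close> by (simp add: p_def algebra_simps)
    finally show ?thesis
      by (simp add: rhs_P_def v_def p_def algebra_simps)
  qed
  moreover have "(v j has_real_derivative \<kappa>' t * a * \<phi> j) (at t)"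
    "(p j has_real_derivative \<kappa>' t * \<psi> j) (at t)" for j t
    unfolding v_def p_def by (auto intro!: derivative_eq_intros \<kappa>(1))
  ultimately have "sub_solution t0 v p"
    unfolding sub_solution_def by blast
  then show ?thesis
    by (simp add: v_def[abs_def] p_def[abs_def])
qed


lemma relaxation_super_solution:
  assumes "b < K0" "0 < c" and f_neg: "\<And>u. u \<in> {b..K0} \<Longrightarrow> f u \<le> - (c + \<beta> / \<alpha> * c)"
  defines "B \<equiv> \<lambda>t. b + (K0 - b) * exp (- (c / (K0 - b)) * t)"
  shows "super_solution 0 (\<lambda>j t. \<beta> / \<alpha> * B t + \<beta> / \<alpha> * c / (2 * \<alpha>)) (\<lambda>j. B)"
proof -
  define \<rho> where "\<rho> = \<beta> / \<alpha>"
  define rate where "rate = c / (K0 - b)"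
  \<comment> \<open>As \<open>\<alpha> \<rho> = \<beta>\<close>, this choice makes \<open>-2 \<alpha> A + 2 \<beta> B\<close> constant.\<close>
  define A where "A t = \<rho> * B t + \<rho> * c / (2 * \<alpha>)" for t
  have "0 < \<rho>" "\<alpha> * \<rho> = \<beta>"
    using alpha_pos beta_pos by (simp_all add: \<rho>_def)
  have "0 < rate"
    using assms(1,2) by (simp add: rate_def)
  have B': "(B has_real_derivative - c * exp (- rate * t)) (at t)" for t
    unfolding B_def rate_def using \<open>b < K0\<close> by (auto intro!: derivative_eq_intros)
  have A': "(A has_real_derivative \<rho> * (- c * exp (- rate * t))) (at t)" for t
    unfolding A_def by (auto intro!: derivative_eq_intros B')
  have "super_solution 0 (\<lambda>j. A) (\<lambda>j. B)"
  proof (rule homogeneous_super_solution[OF A' B'])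
    fix t :: real assume "0 < t"
    then have "exp (- rate * t) \<le> 1"
      using \<open>0 < rate\<close> by simp
    then have decay: "c * exp (- rate * t) \<le> c"
      using \<open>0 < c\<close> by (simp add: mult_left_le)
    have "-2 * \<alpha> * A t + 2 * \<beta> * B t = - (\<rho> * c)"
      using alpha_pos by (simp add: A_def flip: \<open>\<alpha> * \<rho> = \<beta>\<close>) (simp add: algebra_simps)
    also have "\<dots> \<le> \<rho> * (- c * exp (- rate * t))"
      using decay \<open>0 < \<rho>\<close> by (simp add: mult_left_mono)
    finally show "-2 * \<alpha> * A t + 2 * \<beta> * B t \<le> \<rho> * (- c * exp (- rate * t))" .
    have "(K0 - b) * exp (- rate * t) \<le> K0 - b"
      using \<open>exp (- rate * t) \<le> 1\<close> \<open>b < K0\<close> by (intro mult_left_le) auto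
    moreover have "0 \<le> (K0 - b) * exp (- rate * t)"
      using \<open>b < K0\<close> by simp
    ultimately have "B t \<in> {b..K0}"
      unfolding B_def rate_def atLeastAtMost_iff by linarith
    then have "f (B t) + 2 * \<alpha> * A t - 2 * \<beta> * B t = f (B t) + \<rho> * c"
      using alpha_pos by (simp add: A_def flip: \<open>\<alpha> * \<rho> = \<beta>\<close>) (simp add: algebra_simps)
    also have "\<dots> \<le> - c * exp (- rate * t)"
      using f_neg[OF \<open>B t \<in> {b..K0}\<close>] decay by (simp add: \<rho>_def)
    finally show "f (B t) + 2 * \<alpha> * A t - 2 * \<beta> * B t \<le> - c * exp (- rate * t)" .
  qed
  then show ?thesis
    by (simp add: A_def[abs_def] \<rho>_def)
qed

lemma decaying_super_solution:
  assumes "1 < b" "0 < \<epsilon>"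
  obtains A B e where "super_solution 0 (\<lambda>j. A) (\<lambda>j. B)" "K \<le> B 0" "\<beta> / \<alpha> * K \<le> A 0"
    "(B \<longlongrightarrow> b) at_top" "(A \<longlongrightarrow> \<beta> / \<alpha> * b + e) at_top" "e \<le> \<epsilon>"
proof -
  define \<rho> where "\<rho> = \<beta> / \<alpha>"
  have "0 < \<rho>"
    using alpha_pos beta_pos by (simp add: \<rho>_def)
  define K0 where "K0 = max K (b + 1)"
  obtain m where "0 < m" and m: "\<And>u. u \<in> {b..K0} \<Longrightarrow> f u \<le> -m"
    using kpp_neg_bound[OF kpp \<open>1 < b\<close>] by blast
  define c where "c = min (m / (1 + \<rho>)) (2 * \<alpha> * \<epsilon> / \<rho>)"
  define e where "e = \<rho> * c / (2 * \<alpha>)"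
  define B where "B t = b + (K0 - b) * exp (- (c / (K0 - b)) * t)" for t
  define A where "A t = \<rho> * B t + e" for t
  have "0 < c"
    using \<open>0 < m\<close> \<open>0 < \<rho>\<close> alpha_pos \<open>0 < \<epsilon>\<close> by (simp add: c_def)
  have "c \<le> m / (1 + \<rho>)" "c \<le> 2 * \<alpha> * \<epsilon> / \<rho>"
    by (simp_all add: c_def)
  then have "c + \<rho> * c \<le> m" "\<rho> * c \<le> 2 * \<alpha> * \<epsilon>"
    using \<open>0 < \<rho>\<close> by (simp_all add: field_simps)
  have "b < K0"
    by (simp add: K0_def)
  have "super_solution 0 (\<lambda>j. A) (\<lambda>j. B)"
    using relaxation_super_solution[OF \<open>b < K0\<close> \<open>0 < c\<close>] m \<open>c + \<rho> * c \<le> m\<close>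
    by (force simp: A_def[abs_def] B_def[abs_def] e_def \<rho>_def)
  moreover have "K \<le> B 0"
    by (simp add: B_def K0_def)
  moreover have "0 \<le> e"
    using \<open>0 < \<rho>\<close> \<open>0 < c\<close> alpha_pos by (simp add: e_def)
  then have "\<beta> / \<alpha> * K \<le> A 0"
    using mult_left_mono[OF \<open>K \<le> B 0\<close>, of \<rho>] \<open>0 < \<rho>\<close> by (simp add: A_def \<rho>_def)
  moreover have "(B \<longlongrightarrow> b) at_top"
    unfolding B_def using \<open>0 < c\<close> \<open>b < K0\<close> by real_asymp
  moreover have "(A \<longlongrightarrow> \<beta> / \<alpha> * b + e) at_top"
    unfolding A_def \<rho>_def by (intro tendsto_intros \<open>(B \<longlongrightarrow> b) at_top\<close>)
  moreover have "e \<le> \<epsilon>"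
    using \<open>\<rho> * c \<le> 2 * \<alpha> * \<epsilon>\<close> alpha_pos by (simp add: e_def field_simps)
  ultimately show thesis
    using that by blast
qed

lemma bump_rate_conditions:
  assumes "0 < \<delta>" "\<delta> \<le> 1 / 2" "8 * \<beta> * \<delta> \<le> r" "1 - \<delta> \<le> c" "c \<le> 1" "\<mu> \<le> \<alpha> * \<delta>" "\<mu> \<le> r / 4"
    and a: "a = \<beta> / \<alpha> * c * (1 - \<delta>)"
  shows "\<mu> * a \<le> 2 * (\<beta> * c - \<alpha> * a)" "\<mu> + 2 * (\<beta> - \<alpha> * a * c) \<le> r"
proof -
  have "0 \<le> c"
    using assms(2,4) by linarith
  have "0 \<le> a"
    using alpha_pos beta_pos \<open>0 \<le> c\<close> assms(2) by (simp add: a)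
  have \<alpha>a: "\<alpha> * a = \<beta> * c * (1 - \<delta>)"
    using alpha_pos by (simp add: a)
  have "\<mu> * a \<le> (\<alpha> * \<delta>) * a"
    using \<open>0 \<le> a\<close> assms(6) by (rule mult_right_mono[rotated])
  also have "\<dots> = \<delta> * (\<beta> * c) * (1 - \<delta>)"
    using \<alpha>a by (simp add: mult_ac)
  also have "\<dots> \<le> \<delta> * (\<beta> * c)"
    using assms(1) \<open>0 \<le> c\<close> beta_pos by (simp add: mult_left_le)
  finally have "\<mu> * a \<le> \<delta> * (\<beta> * c)" .
  moreover have "0 \<le> \<delta> * (\<beta> * c)"
    using assms(1) \<open>0 \<le> c\<close> beta_pos by simp
  moreover have "\<beta> * c - \<alpha> * a = \<delta> * (\<beta> * c)"
    using \<alpha>a by (simp add: algebra_simps)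
  ultimately show "\<mu> * a \<le> 2 * (\<beta> * c - \<alpha> * a)"
    by simp
  have "1 - c^2 = (1 - c) * (1 + c)"
    by (simp add: power2_eq_square algebra_simps)
  also have "\<dots> \<le> \<delta> * 2"
    using assms(4,5) \<open>0 \<le> c\<close> by (intro mult_mono) auto
  finally have "\<beta> * (1 - c^2) \<le> \<beta> * (2 * \<delta>)"
    using beta_pos by (intro mult_left_mono) auto
  moreover have "\<beta> - \<alpha> * a * c = \<beta> * (1 - c^2) + \<beta> * \<delta> * c^2"
    unfolding \<alpha>a by (simp add: power2_eq_square algebra_simps)
  moreover have "\<beta> * \<delta> * c^2 \<le> \<beta> * \<delta>"
    using \<open>0 \<le> c\<close> assms(1,5) beta_pos by (simp add: mult_left_le power_le_one)
  ultimately show "\<mu> + 2 * (\<beta> - \<alpha> * a * c) \<le> r"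
    using assms(3,7) by (simp add: algebra_simps)
qed

text \<open>\<open>P j\<close> sits at the integer \<open>j\<close> and \<open>V j\<close> at the half-integer \<open>j + 1/2\<close>, so both
  components sample the same cosine bump.\<close>

lemma cos_bump_sub_solution:
  assumes "0 < \<eta>" "\<eta> \<le> 1 / 2"
  obtains \<theta> \<mu> a where "0 < \<theta>" "0 < \<mu>" "\<beta> / \<alpha> * (1 - \<eta>)^2 \<le> a"
    "\<And>x. \<bar>x\<bar> \<le> R \<Longrightarrow> 1 - \<eta> \<le> cos_bump \<theta> x"
    "\<And>\<kappa> \<kappa>' t0. (\<And>t. (\<kappa> has_real_derivative \<kappa>' t) (at t)) \<Longrightarrow> (\<And>t. 0 < \<kappa> t) \<Longrightarrow>
       (\<And>t. \<kappa> t \<le> 1 - \<eta>) \<Longrightarrow> (\<And>t. \<kappa>' t \<le> \<mu> * \<kappa> t) \<Longrightarrow>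
       sub_solution t0 (\<lambda>j t. \<kappa> t * a * cos_bump \<theta> (j + 1 / 2)) (\<lambda>j t. \<kappa> t * cos_bump \<theta> j)"
proof -
  obtain r where "0 < r" and r: "\<And>u. 0 < u \<Longrightarrow> u \<le> 1 - \<eta> \<Longrightarrow> r * u \<le> f u"
    using kpp_linear_lower_bound[OF kpp, of "1 - \<eta>"] assms(1) by auto
  define \<delta> where "\<delta> = min \<eta> (r / (8 * \<beta>))"
  define \<theta> where "\<theta> = \<delta> / (\<bar>R\<bar> + 1)"
  define c where "c = cos (\<theta> / 2)"
  define a where "a = \<beta> / \<alpha> * c * (1 - \<delta>)"
  define \<mu> where "\<mu> = min (r / 4) (\<alpha> * \<delta>)"
  have "0 < \<delta>" "\<delta> \<le> \<eta>" "8 * \<beta> * \<delta> \<le> r"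
    using assms \<open>0 < r\<close> beta_pos by (auto simp: \<delta>_def min_def field_simps)
  have "0 < \<theta>" "\<theta> \<le> \<delta>"
    using \<open>0 < \<delta>\<close> by (auto simp: \<theta>_def field_simps)
  have "1 - \<delta> \<le> c"
    using cos_ge_one_minus_abs[of "\<theta> / 2" \<delta>] \<open>0 < \<theta>\<close> \<open>\<theta> \<le> \<delta>\<close> \<open>\<delta> \<le> \<eta>\<close> assms(2)
    by (simp add: c_def)
  have bump: "1 - \<eta> \<le> cos_bump \<theta> x" if "\<bar>x\<bar> \<le> R" for x
  proof -
    have "\<theta> * \<bar>x\<bar> \<le> \<theta> * (\<bar>R\<bar> + 1)"
      using that \<open>0 < \<theta>\<close> by (intro mult_left_mono) auto
    also have "\<dots> = \<delta>"
      by (simp add: \<theta>_def)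
    finally have "\<theta> * \<bar>x\<bar> \<le> \<delta>" .
    then have "1 - \<delta> \<le> cos_bump \<theta> x"
      using \<open>0 < \<theta>\<close> \<open>\<delta> \<le> \<eta>\<close> assms(2) by (intro cos_bump_ge) auto
    then show ?thesis
      using \<open>\<delta> \<le> \<eta>\<close> by linarith
  qed
  have rates: "\<mu> * a \<le> 2 * (\<beta> * c - \<alpha> * a)" "\<mu> + 2 * (\<beta> - \<alpha> * a * c) \<le> r"
    using bump_rate_conditions[OF \<open>0 < \<delta>\<close> _ \<open>8 * \<beta> * \<delta> \<le> r\<close> \<open>1 - \<delta> \<le> c\<close> _ _ _ a_def]
      \<open>\<delta> \<le> \<eta>\<close> assms(2) by (auto simp: c_def \<mu>_def)
  show thesis
  proof (rule that)
    show "0 < \<theta>" "0 < \<mu>" "\<And>x. \<bar>x\<bar> \<le> R \<Longrightarrow> 1 - \<eta> \<le> cos_bump \<theta> x"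
      using \<open>0 < \<theta>\<close> \<open>0 < r\<close> \<open>0 < \<delta>\<close> alpha_pos bump by (auto simp: \<mu>_def)
    have "(1 - \<eta>) * (1 - \<eta>) \<le> c * (1 - \<delta>)"
      using \<open>1 - \<delta> \<le> c\<close> \<open>\<delta> \<le> \<eta>\<close> assms(2) by (intro mult_mono) auto
    then have "\<beta> / \<alpha> * ((1 - \<eta>) * (1 - \<eta>)) \<le> \<beta> / \<alpha> * (c * (1 - \<delta>))"
      using alpha_pos beta_pos by (intro mult_left_mono) auto
    then show "\<beta> / \<alpha> * (1 - \<eta>)^2 \<le> a"
      by (simp add: a_def power2_eq_square mult.assoc)
    have "0 \<le> a"
      using \<open>1 - \<delta> \<le> c\<close> \<open>\<delta> \<le> \<eta>\<close> assms(2) alpha_pos beta_pos by (simp add: a_def)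
    fix \<kappa> \<kappa>' :: "real \<Rightarrow> real" and t0 :: real
    assume \<kappa>: "\<And>t. (\<kappa> has_real_derivative \<kappa>' t) (at t)" "\<And>t. 0 < \<kappa> t" "\<And>t. \<kappa> t \<le> 1 - \<eta>"
      "\<And>t. \<kappa>' t \<le> \<mu> * \<kappa> t"
    show "sub_solution t0 (\<lambda>j t. \<kappa> t * a * cos_bump \<theta> (j + 1 / 2)) (\<lambda>j t. \<kappa> t * cos_bump \<theta> j)"
    proof (rule profile_sub_solution[where c = c, OF _ _ _ _ _ _ \<kappa> r \<open>0 \<le> a\<close> rates])
      have "\<theta> * (1 / 2) \<le> pi / 2"
        using \<open>\<theta> \<le> \<delta>\<close> \<open>\<delta> \<le> \<eta>\<close> assms(2) pi_gt3 by linarith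
      note midpoint = cos_bump_midpoint[OF less_imp_le[OF \<open>0 < \<theta>\<close>] _ this]
      fix j :: int
      show "2 * c * cos_bump \<theta> (j + 1 / 2) \<le> cos_bump \<theta> j + cos_bump \<theta> (j + 1)"
        using midpoint[of "j + 1 / 2"] by (simp add: c_def add.assoc)
      show "2 * c * cos_bump \<theta> j \<le> cos_bump \<theta> (j + 1 / 2) + cos_bump \<theta> (of_int (j - 1) + 1 / 2)"
        using midpoint[of j] by (simp add: c_def add.commute diff_add_eq)
    qed (use \<open>0 < \<theta>\<close> in \<open>simp_all add: cos_bump_nonneg cos_bump_le_one\<close>)
  qed
qed

end

locale kpp_lattice_solution = kpp_lattice +
  fixes V P :: "int \<Rightarrow> real \<Rightarrow> real"
  assumes V_cont: "\<forall>j. continuous_on {0..} (V j)"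
    and P_cont: "\<forall>j. continuous_on {0..} (P j)"
    and V_ode: "\<forall>j t. t > 0 \<longrightarrow>
        (V j has_real_derivative (-2 * \<alpha> * V j t + \<beta> * (P j t + P (j + 1) t))) (at t)"
    and P_ode: "\<forall>j t. t > 0 \<longrightarrow>
        (P j has_real_derivative (f (P j t) + \<alpha> * (V j t + V (j - 1) t) - 2 * \<beta> * P j t)) (at t)"
    and bdd: "\<forall>T\<ge>0. \<exists>M. \<forall>j. \<forall>t\<in>{0..T}. \<bar>V j t\<bar> \<le> M \<and> \<bar>P j t\<bar> \<le> M"
    and init_nonneg: "\<forall>j. 0 \<le> V j 0 \<and> 0 \<le> P j 0"
begin

lemma V_deriv: "0 < t \<Longrightarrow> (V j has_real_derivative rhs_V V P j t) (at t)"
  using V_ode by (simp add: rhs_V_def)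

lemma P_deriv: "0 < t \<Longrightarrow> (P j has_real_derivative rhs_P V P j t) (at t)"
  using P_ode by (simp add: rhs_P_def)

lemma solution_admissible:
  assumes "0 \<le> t0"
  shows "admissible t0 V P"
proof -
  have "\<exists>M. \<forall>j. \<forall>t\<in>{t0..T}. \<bar>V j t\<bar> \<le> M \<and> \<bar>P j t\<bar> \<le> M" for T
  proof (cases "0 \<le> T")
    case True
    then obtain M where "\<forall>j. \<forall>t\<in>{0..T}. \<bar>V j t\<bar> \<le> M \<and> \<bar>P j t\<bar> \<le> M"
      using bdd by blast
    then show ?thesis
      using assms by (intro exI[of _ M]) auto
  qed (use assms in auto)
  moreover have "continuous_on {t0..} (V j)" "continuous_on {t0..} (P j)" for j
    using V_cont P_cont assms by (auto elim!: continuous_on_subset)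
  ultimately show ?thesis
    by (simp add: admissible_def)
qed

lemma solution_sub_solution:
  assumes "0 \<le> t0"
  shows "sub_solution t0 V P"
  unfolding sub_solution_def
proof (intro conjI allI impI solution_admissible[OF assms])
  fix j t assume "t0 < t"
  with assms have "0 < t"
    by linarith
  then show "\<exists>D. (V j has_real_derivative D) (at t) \<and> D \<le> rhs_V V P j t"
    "\<exists>D. (P j has_real_derivative D) (at t) \<and> D \<le> rhs_P V P j t"
    using V_deriv P_deriv by blast+
qed

lemma solution_super_solution:
  assumes "0 \<le> t0"
  shows "super_solution t0 V P"
  unfolding super_solution_def
proof (intro conjI allI impI solution_admissible[OF assms])
  fix j t assume "t0 < t"
  with assms have "0 < t"
    by linarith
  then show "\<exists>D. (V j has_real_derivative D) (at t) \<and> rhs_V V P j t \<le> D"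
    "\<exists>D. (P j has_real_derivative D) (at t) \<and> rhs_P V P j t \<le> D"
    using V_deriv P_deriv by blast+
qed

lemma solution_nonneg: "0 \<le> t \<Longrightarrow> 0 \<le> V j t \<and> 0 \<le> P j t"
  using comparison[OF zero_sub_solution solution_super_solution[of 0]] init_nonneg by auto

lemma reaction_lower_linear:
  assumes "0 \<le> t"
  obtains L where "\<And>j s. s \<in> {0..t} \<Longrightarrow> - L * P j s \<le> f (P j s)"
proof -
  obtain M where M: "\<And>j s. s \<in> {0..t} \<Longrightarrow> \<bar>V j s\<bar> \<le> M \<and> \<bar>P j s\<bar> \<le> M"
    using admissible_bound[OF solution_admissible[of 0]] by blast
  obtain L where L: "L-lipschitz_on {-M..M} f"
    using kpp_lipschitz[OF kpp] .
  show thesis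
  proof (rule that[of L])
    fix j s assume "s \<in> {0..t}"
    then have "dist (f (P j s)) (f 0) \<le> L * dist (P j s) 0"
      using M[of s j] by (intro lipschitz_onD[OF L]) auto
    then show "- L * P j s \<le> f (P j s)"
      using solution_nonneg[of s j] \<open>s \<in> {0..t}\<close> kpp_zero[OF kpp] by (simp add: dist_real_def)
  qed
qed

lemma V_pos_persists:
  assumes "0 \<le> s" "s \<le> t" "0 < V j s"
  shows "0 < V j t"
proof -
  have "exp (2 * \<alpha> * s) * V j s \<le> exp (2 * \<alpha> * t) * V j t"
  proof (rule exp_weighted_mono[OF assms(2)])
    show "continuous_on {s..t} (V j)"
      using solution_admissible[OF assms(1)] by (rule admissible_continuous)
    fix r assume "s < r" "r < t"
    then have "- (2 * \<alpha>) * V j r \<le> rhs_V V P j r"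
      using solution_nonneg[of r j] solution_nonneg[of r "j + 1"] beta_pos assms(1) by (simp add: rhs_V_def)
    then show "\<exists>D. (V j has_real_derivative D) (at r) \<and> - (2 * \<alpha>) * V j r \<le> D"
      using V_deriv[of r j] \<open>s < r\<close> assms(1) by auto
  qed
  moreover have "0 < exp (2 * \<alpha> * s) * V j s"
    using assms(3) by simp
  ultimately have "0 < exp (2 * \<alpha> * t) * V j t"
    by linarith
  then show ?thesis
    by (simp add: zero_less_mult_iff)
qed

lemma P_pos_persists:
  assumes "0 \<le> s" "s \<le> t" "0 < P j s"
  shows "0 < P j t"
proof -
  obtain L where L: "\<And>j r. r \<in> {0..t} \<Longrightarrow> - L * P j r \<le> f (P j r)"
    using reaction_lower_linear[of t] assms by auto
  have "exp ((L + 2 * \<beta>) * s) * P j s \<le> exp ((L + 2 * \<beta>) * t) * P j t"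
  proof (rule exp_weighted_mono[OF assms(2)])
    show "continuous_on {s..t} (P j)"
      using solution_admissible[OF assms(1)] by (rule admissible_continuous)
    fix r assume "s < r" "r < t"
    then have "0 \<le> \<alpha> * (V j r + V (j - 1) r)"
      using solution_nonneg[of r j] solution_nonneg[of r "j - 1"] alpha_pos assms(1) by simp
    then have "- (L + 2 * \<beta>) * P j r \<le> rhs_P V P j r"
      using L[where j = j and r = r] \<open>s < r\<close> \<open>r < t\<close> assms(1) unfolding rhs_P_def
      by (simp add: algebra_simps)
    then show "\<exists>D. (P j has_real_derivative D) (at r) \<and> - (L + 2 * \<beta>) * P j r \<le> D"
      using P_deriv[of r j] \<open>s < r\<close> assms(1) by auto
  qed
  moreover have "0 < exp ((L + 2 * \<beta>) * s) * P j s"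
    using assms(3) by simp
  ultimately have "0 < exp ((L + 2 * \<beta>) * t) * P j t"
    by linarith
  then show ?thesis
    by (simp add: zero_less_mult_iff)
qed

lemma V_pos_from_P:
  assumes "0 \<le> s" "s < t" "0 < P j s \<or> 0 < P (j + 1) s"
  shows "0 < V j t"
proof -
  have "exp (2 * \<alpha> * s) * V j s < exp (2 * \<alpha> * t) * V j t"
  proof (rule exp_weighted_strict_mono[OF assms(2)])
    show "continuous_on {s..t} (V j)"
      using solution_admissible[OF assms(1)] by (rule admissible_continuous)
    fix r assume "s < r" "r < t"
    then have "0 < P j r \<or> 0 < P (j + 1) r"
      using assms(3) P_pos_persists[OF assms(1) less_imp_le[OF \<open>s < r\<close>]] by blast
    then have "0 < P j r + P (j + 1) r"
      using solution_nonneg[of r j] solution_nonneg[of r "j + 1"] \<open>s < r\<close> assms(1) by auto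
    then have "- (2 * \<alpha>) * V j r < rhs_V V P j r"
      using beta_pos by (simp add: rhs_V_def)
    then show "\<exists>D. (V j has_real_derivative D) (at r) \<and> - (2 * \<alpha>) * V j r < D"
      using V_deriv[of r j] \<open>s < r\<close> assms(1) by auto
  qed
  moreover have "0 \<le> exp (2 * \<alpha> * s) * V j s"
    using solution_nonneg[of s j] assms(1) by simp
  ultimately have "0 < exp (2 * \<alpha> * t) * V j t"
    by linarith
  then show ?thesis
    by (simp add: zero_less_mult_iff)
qed

lemma P_pos_from_V:
  assumes "0 \<le> s" "s < t" "0 < V j s \<or> 0 < V (j - 1) s"
  shows "0 < P j t"
proof -
  obtain L where L: "\<And>j r. r \<in> {0..t} \<Longrightarrow> - L * P j r \<le> f (P j r)"
    using reaction_lower_linear[of t] assms by auto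
  have "exp ((L + 2 * \<beta>) * s) * P j s < exp ((L + 2 * \<beta>) * t) * P j t"
  proof (rule exp_weighted_strict_mono[OF assms(2)])
    show "continuous_on {s..t} (P j)"
      using solution_admissible[OF assms(1)] by (rule admissible_continuous)
    fix r assume "s < r" "r < t"
    then have "0 < V j r \<or> 0 < V (j - 1) r"
      using assms(3) V_pos_persists[OF assms(1) less_imp_le[OF \<open>s < r\<close>]] by blast
    then have "0 < V j r + V (j - 1) r"
      using solution_nonneg[of r j] solution_nonneg[of r "j - 1"] \<open>s < r\<close> assms(1) by auto
    then have "0 < \<alpha> * (V j r + V (j - 1) r)"
      using alpha_pos by simp
    then have "- (L + 2 * \<beta>) * P j r < rhs_P V P j r"
      using L[where j = j and r = r] \<open>s < r\<close> \<open>r < t\<close> assms(1) unfolding rhs_P_def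
      by (simp add: algebra_simps)
    then show "\<exists>D. (P j has_real_derivative D) (at r) \<and> - (L + 2 * \<beta>) * P j r < D"
      using P_deriv[of r j] \<open>s < r\<close> assms(1) by auto
  qed
  moreover have "0 \<le> exp ((L + 2 * \<beta>) * s) * P j s"
    using solution_nonneg[of s j] assms(1) by simp
  ultimately have "0 < exp ((L + 2 * \<beta>) * t) * P j t"
    by linarith
  then show ?thesis
    by (simp add: zero_less_mult_iff)
qed

lemma positive_site_spreads:
  assumes site: "\<And>t. 0 < t \<Longrightarrow> 0 < V j t \<and> 0 < P j t" and "0 < t"
  shows "0 < V (j + 1) t \<and> 0 < P (j + 1) t" "0 < V (j - 1) t \<and> 0 < P (j - 1) t"
proof -
  have P_right: "0 < P (j + 1) r" if "0 < r" for r
    using P_pos_from_V[of "r / 2" r "j + 1"] site[of "r / 2"] that by simp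
  have V_left: "0 < V (j - 1) r" if "0 < r" for r
    using V_pos_from_P[of "r / 2" r "j - 1"] site[of "r / 2"] that by simp
  show "0 < V (j + 1) t \<and> 0 < P (j + 1) t"
    using V_pos_from_P[of "t / 2" t "j + 1"] P_right[of "t / 2"] P_right[of t] \<open>0 < t\<close> by simp
  show "0 < V (j - 1) t \<and> 0 < P (j - 1) t"
    using P_pos_from_V[of "t / 2" t "j - 1"] V_left[of "t / 2"] V_left[of t] \<open>0 < t\<close> by simp
qed

lemma solution_positive:
  assumes "0 < V i 0 \<or> 0 < P i 0" "0 < t"
  shows "0 < V j t \<and> 0 < P j t"
proof -
  obtain k where k: "\<And>t. 0 < t \<Longrightarrow> 0 < V k t \<and> 0 < P k t"
  proof (cases "0 < P i 0")
    case True
    then show thesis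
      using that[of i] P_pos_persists[of 0 _ i] V_pos_from_P[of 0 _ i] by simp
  next
    case False
    then have "0 < V i 0"
      using assms(1) by simp
    then have P_right: "0 < P (i + 1) r" if "0 < r" for r
      using P_pos_from_V[of 0 r "i + 1"] that by simp
    show thesis
    proof (rule that[of "i + 1"])
      fix t :: real assume "0 < t"
      then show "0 < V (i + 1) t \<and> 0 < P (i + 1) t"
        using V_pos_from_P[of "t / 2" t "i + 1"] P_right[of "t / 2"] P_right[of t] by simp
    qed
  qed
  have "\<forall>t>0. 0 < V j t \<and> 0 < P j t"
  proof (induction j rule: int_induct[where k = k])
    case base
    then show ?case
      using k by blast
  next
    case (step1 i)
    then show ?case
      using positive_site_spreads(1)[of i] by blast
  next
    case (step2 i)
    then show ?case
      using positive_site_spreads(2)[of i] by blast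
  qed
  then show ?thesis
    using assms(2) by blast
qed

lemma eventually_upper:
  assumes "0 < \<eta>"
  shows "\<forall>\<^sub>F t in at_top. \<forall>j. V j t < \<beta> / \<alpha> + \<eta> \<and> P j t < 1 + \<eta>"
proof -
  define \<rho> where "\<rho> = \<beta> / \<alpha>"
  define \<delta> where "\<delta> = \<eta> / (2 * (1 + \<rho>))"
  have "0 < \<rho>"
    using alpha_pos beta_pos by (simp add: \<rho>_def)
  have "0 < \<delta>" "(1 + \<rho>) * \<delta> = \<eta> / 2"
    using \<open>0 < \<eta>\<close> \<open>0 < \<rho>\<close> by (simp_all add: \<delta>_def field_simps)
  moreover have "0 < \<rho> * \<delta>"
    using \<open>0 < \<rho>\<close> \<open>0 < \<delta>\<close> by simp
  ultimately have "\<rho> * \<delta> + \<delta> < \<eta>" "\<delta> < \<eta>"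
    by (simp_all add: algebra_simps)
  obtain M0 where M0: "\<And>j. \<bar>V j 0\<bar> \<le> M0 \<and> \<bar>P j 0\<bar> \<le> M0"
    using admissible_bound[OF solution_admissible[of 0], of 0] by auto
  define K where "K = max M0 (M0 / \<rho>)"
  obtain A B e where super: "super_solution 0 (\<lambda>j. A) (\<lambda>j. B)" and "K \<le> B 0" "\<rho> * K \<le> A 0"
    and B_lim: "(B \<longlongrightarrow> 1 + \<delta>) at_top" and A_lim: "(A \<longlongrightarrow> \<rho> * (1 + \<delta>) + e) at_top" and "e \<le> \<delta>"
    using decaying_super_solution[of "1 + \<delta>" \<delta> K] \<open>0 < \<delta>\<close> unfolding \<rho>_def by auto
  have "V j 0 \<le> A 0" "P j 0 \<le> B 0" for j
  proof -
    have "M0 = \<rho> * (M0 / \<rho>)"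
      using \<open>0 < \<rho>\<close> by simp
    also have "\<dots> \<le> \<rho> * K"
      using \<open>0 < \<rho>\<close> by (intro mult_left_mono) (auto simp: K_def)
    finally have "M0 \<le> \<rho> * K" .
    then show "V j 0 \<le> A 0" "P j 0 \<le> B 0"
      using M0[of j] \<open>K \<le> B 0\<close> \<open>\<rho> * K \<le> A 0\<close> by (auto simp: K_def)
  qed
  then have below: "V j t \<le> A t \<and> P j t \<le> B t" if "0 \<le> t" for j t
    using comparison[OF solution_sub_solution[of 0] super] that by auto
  have "\<rho> * (1 + \<delta>) + e < \<rho> + \<eta>"
    using \<open>\<rho> * \<delta> + \<delta> < \<eta>\<close> \<open>e \<le> \<delta>\<close> by (simp add: algebra_simps)
  then have "\<forall>\<^sub>F t in at_top. A t < \<rho> + \<eta>"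
    by (rule order_tendstoD(2)[OF A_lim])
  moreover have "\<forall>\<^sub>F t in at_top. B t < 1 + \<eta>"
    using \<open>\<delta> < \<eta>\<close> by (intro order_tendstoD(2)[OF B_lim]) simp
  ultimately show ?thesis
    using eventually_ge_at_top[of 0]
  proof eventually_elim
    case (elim t)
    then show ?case
      using below[OF elim(3)] unfolding \<rho>_def by (blast intro: le_less_trans)
  qed
qed


lemma bump_fits_below:
  assumes "0 < V i 0 \<or> 0 < P i 0" "0 < \<theta>" "0 \<le> a" "0 < k"
  obtains \<kappa>0 where "0 < \<kappa>0" "\<kappa>0 \<le> k"
    "\<And>j. \<kappa>0 * a * cos_bump \<theta> (j + 1 / 2) \<le> V j 1 \<and> \<kappa>0 * cos_bump \<theta> j \<le> P j 1"
proof -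
  define S where "S = {j :: int. \<bar>j\<bar> \<le> pi / (2 * \<theta>) + 1}"
  have "finite S"
  proof (rule finite_subset)
    show "S \<subseteq> {-\<lceil>pi / (2 * \<theta>) + 1\<rceil>..\<lceil>pi / (2 * \<theta>) + 1\<rceil>}"
      by (auto simp: S_def abs_le_iff) linarith+
  qed simp
  have outside: "cos_bump \<theta> (j + 1 / 2) = 0 \<and> cos_bump \<theta> j = 0" if "j \<notin> S" for j
  proof -
    have "cos_bump \<theta> x = 0" if "pi / (2 * \<theta>) < \<bar>x\<bar>" for x
      using that \<open>0 < \<theta>\<close> by (simp add: cos_bump_def field_simps)
    with \<open>j \<notin> S\<close> show ?thesis
      by (auto simp: S_def)
  qed
  define \<delta> where "\<delta> = Min (insert 1 ((\<lambda>j. min (V j 1) (P j 1)) ` S))"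
  have "0 < \<delta>"
    using \<open>finite S\<close> solution_positive[OF assms(1)] by (simp add: \<delta>_def)
  have inside: "\<delta> \<le> V j 1 \<and> \<delta> \<le> P j 1" if "j \<in> S" for j
  proof -
    have "\<delta> \<le> min (V j 1) (P j 1)"
      unfolding \<delta>_def using \<open>finite S\<close> that by (intro Min_le) auto
    then show ?thesis
      by simp
  qed
  define \<kappa>0 where "\<kappa>0 = min k (\<delta> / (1 + a))"
  have "0 < \<kappa>0" "\<kappa>0 \<le> k"
    using \<open>0 < \<delta>\<close> assms(3,4) by (simp_all add: \<kappa>0_def)
  have "\<kappa>0 * (1 + a) \<le> \<delta> / (1 + a) * (1 + a)"
    using assms(3) by (intro mult_right_mono) (auto simp: \<kappa>0_def)
  also have "\<dots> = \<delta>"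
    using assms(3) by simp
  finally have "\<kappa>0 * a + \<kappa>0 \<le> \<delta>"
    by (simp add: algebra_simps)
  show thesis
  proof (rule that[OF \<open>0 < \<kappa>0\<close> \<open>\<kappa>0 \<le> k\<close>])
    fix j
    show "\<kappa>0 * a * cos_bump \<theta> (j + 1 / 2) \<le> V j 1 \<and> \<kappa>0 * cos_bump \<theta> j \<le> P j 1"
    proof (cases "j \<in> S")
      case True
      have "\<kappa>0 * a * cos_bump \<theta> (j + 1 / 2) \<le> \<kappa>0 * a" "\<kappa>0 * cos_bump \<theta> j \<le> \<kappa>0"
        using \<open>0 < \<kappa>0\<close> assms(3) cos_bump_le_one by (simp_all add: mult_left_le)
      moreover have "0 \<le> \<kappa>0 * a" "\<delta> \<le> V j 1" "\<delta> \<le> P j 1"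
        using \<open>0 < \<kappa>0\<close> assms(3) inside[OF True] by simp_all
      ultimately show ?thesis
        using \<open>\<kappa>0 * a + \<kappa>0 \<le> \<delta>\<close> \<open>0 < \<kappa>0\<close> by (intro conjI) linarith+
    qed (use outside solution_nonneg[of 1] in simp)
  qed
qed

lemma eventually_lower_product:
  assumes "0 < V i 0 \<or> 0 < P i 0" and "0 < \<eta>" "\<eta> \<le> 1 / 2"
  shows "\<forall>\<^sub>F t in at_top. \<forall>j. \<bar>j\<bar> \<le> J \<longrightarrow> \<beta> / \<alpha> * (1 - \<eta>)^5 \<le> V j t \<and> (1 - \<eta>)^3 \<le> P j t"
proof -
  obtain \<theta> \<mu> a where "0 < \<theta>" "0 < \<mu>" and a: "\<beta> / \<alpha> * (1 - \<eta>)^2 \<le> a"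
    and bump: "\<And>x. \<bar>x\<bar> \<le> \<bar>real_of_int J\<bar> + 1 \<Longrightarrow> 1 - \<eta> \<le> cos_bump \<theta> x"
    and sub: "\<And>\<kappa> \<kappa>' t0. (\<And>t. (\<kappa> has_real_derivative \<kappa>' t) (at t)) \<Longrightarrow> (\<And>t. 0 < \<kappa> t) \<Longrightarrow>
       (\<And>t. \<kappa> t \<le> 1 - \<eta>) \<Longrightarrow> (\<And>t. \<kappa>' t \<le> \<mu> * \<kappa> t) \<Longrightarrow>
       sub_solution t0 (\<lambda>j t. \<kappa> t * a * cos_bump \<theta> (j + 1 / 2)) (\<lambda>j t. \<kappa> t * cos_bump \<theta> j)"
    using cos_bump_sub_solution[OF \<open>0 < \<eta>\<close> \<open>\<eta> \<le> 1 / 2\<close>, of "\<bar>real_of_int J\<bar> + 1"] by blast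
  have "0 \<le> \<beta> / \<alpha> * (1 - \<eta>)^2"
    using alpha_pos beta_pos by simp
  with a have "0 \<le> a"
    by linarith
  obtain \<kappa>0 where "0 < \<kappa>0" "\<kappa>0 \<le> 1 - \<eta>"
    and init: "\<And>j. \<kappa>0 * a * cos_bump \<theta> (j + 1 / 2) \<le> V j 1 \<and> \<kappa>0 * cos_bump \<theta> j \<le> P j 1"
    using bump_fits_below[OF assms(1) \<open>0 < \<theta>\<close> \<open>0 \<le> a\<close>, of "1 - \<eta>"] \<open>\<eta> \<le> 1 / 2\<close> by auto
  obtain \<kappa> \<kappa>' where \<kappa>: "\<And>t. (\<kappa> has_real_derivative \<kappa>' t) (at t)" "\<And>t. 0 < \<kappa> t"
    "\<And>t. \<kappa> t \<le> 1 - \<eta>" "\<And>t. \<kappa>' t \<le> \<mu> * \<kappa> t" and "\<kappa> 1 = \<kappa>0"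
    and \<kappa>_lim: "(\<kappa> \<longlongrightarrow> 1 - \<eta>) at_top"
    using logistic_curve[OF \<open>0 < \<kappa>0\<close> \<open>\<kappa>0 \<le> 1 - \<eta>\<close> \<open>0 < \<mu>\<close>, of 1] by blast
  have below: "\<kappa> t * a * cos_bump \<theta> (j + 1 / 2) \<le> V j t \<and> \<kappa> t * cos_bump \<theta> j \<le> P j t"
    if "1 \<le> t" for j t
    using comparison[OF sub[OF \<kappa>] solution_super_solution[of 1]] init \<open>\<kappa> 1 = \<kappa>0\<close> that by simp
  have "\<forall>\<^sub>F t in at_top. (1 - \<eta>)^2 < \<kappa> t"
    using \<open>0 < \<eta>\<close> \<open>\<eta> \<le> 1 / 2\<close> by (intro order_tendstoD(1)[OF \<kappa>_lim]) (simp add: power2_eq_square)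
  then show ?thesis
    using eventually_ge_at_top[of 1]
  proof eventually_elim
    case (elim t)
    show ?case
    proof (intro allI impI)
      fix j :: int assume "\<bar>j\<bar> \<le> J"
      then have "1 - \<eta> \<le> cos_bump \<theta> (j + 1 / 2)" "1 - \<eta> \<le> cos_bump \<theta> j"
        by (auto intro!: bump)
      have "0 \<le> 1 - \<eta>"
        using \<open>\<eta> \<le> 1 / 2\<close> by simp
      have "(1 - \<eta>)^2 * (1 - \<eta>) \<le> \<kappa> t * cos_bump \<theta> j"
        using elim(1) \<open>1 - \<eta> \<le> cos_bump \<theta> j\<close> \<open>0 \<le> 1 - \<eta>\<close> \<kappa>(2)[of t]
        by (intro mult_mono) auto
      moreover have "(1 - \<eta>)^2 * (\<beta> / \<alpha> * (1 - \<eta>)^2) * (1 - \<eta>) \<le> \<kappa> t * a * cos_bump \<theta> (j + 1 / 2)"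
        using elim(1) a \<open>1 - \<eta> \<le> cos_bump \<theta> (j + 1 / 2)\<close> \<open>0 \<le> 1 - \<eta>\<close> \<kappa>(2)[of t] \<open>0 \<le> a\<close>
          alpha_pos beta_pos by (intro mult_mono) auto
      moreover have "(1 - \<eta>)^2 * (1 - \<eta>) = (1 - \<eta>)^3"
        "(1 - \<eta>)^2 * (\<beta> / \<alpha> * (1 - \<eta>)^2) * (1 - \<eta>) = \<beta> / \<alpha> * (1 - \<eta>)^5"
        by (simp_all add: eval_nat_numeral mult_ac)
      ultimately show "\<beta> / \<alpha> * (1 - \<eta>)^5 \<le> V j t \<and> (1 - \<eta>)^3 \<le> P j t"
        using below[OF elim(2), of j] by linarith
    qed
  qed
qed

lemma eventually_lower:
  assumes "0 < V i 0 \<or> 0 < P i 0" "0 < \<eta>"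
  shows "\<forall>\<^sub>F t in at_top. \<forall>j. \<bar>j\<bar> \<le> J \<longrightarrow> \<beta> / \<alpha> - \<eta> < V j t \<and> 1 - \<eta> < P j t"
proof -
  define \<rho> where "\<rho> = \<beta> / \<alpha>"
  define \<epsilon> where "\<epsilon> = min (1 / 2) (\<eta> / (10 * (1 + \<rho>)))"
  have "0 < \<rho>"
    using alpha_pos beta_pos by (simp add: \<rho>_def)
  have "0 < \<epsilon>"
    using \<open>0 < \<eta>\<close> \<open>0 < \<rho>\<close> by (simp add: \<epsilon>_def)
  have "\<epsilon> \<le> 1 / 2" "\<epsilon> \<le> \<eta> / (10 * (1 + \<rho>))"
    unfolding \<epsilon>_def by (rule min.cobounded1, rule min.cobounded2)
  then have "\<epsilon> * (10 * (1 + \<rho>)) \<le> \<eta>"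
    using \<open>0 < \<rho>\<close> by (simp add: pos_le_divide_eq)
  have "1 - 5 * \<epsilon> \<le> (1 - \<epsilon>)^5" "1 - 3 * \<epsilon> \<le> (1 - \<epsilon>)^3"
    using Bernoulli_inequality[of "- \<epsilon>" 5] Bernoulli_inequality[of "- \<epsilon>" 3] \<open>\<epsilon> \<le> 1 / 2\<close> by simp_all
  moreover have "\<rho> * (1 - 5 * \<epsilon>) = \<rho> - 5 * (\<epsilon> * \<rho>)" "\<epsilon> * (10 * (1 + \<rho>)) = 10 * \<epsilon> + 10 * (\<epsilon> * \<rho>)"
    by (simp_all add: algebra_simps)
  moreover have "0 < \<epsilon> * \<rho>"
    using \<open>0 < \<epsilon>\<close> \<open>0 < \<rho>\<close> by simp
  ultimately have bounds: "\<rho> - \<eta> < \<rho> * (1 - \<epsilon>)^5" "1 - \<eta> < (1 - \<epsilon>)^3"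
    using mult_left_mono[of "1 - 5 * \<epsilon>" "(1 - \<epsilon>)^5" \<rho>] \<open>0 < \<rho>\<close> \<open>0 < \<epsilon>\<close>
      \<open>\<epsilon> * (10 * (1 + \<rho>)) \<le> \<eta>\<close> by linarith+
  show ?thesis
    using eventually_lower_product[OF assms(1) \<open>0 < \<epsilon>\<close> \<open>\<epsilon> \<le> 1 / 2\<close>, of J]
  proof eventually_elim
    case (elim t)
    then show ?case
      using bounds unfolding \<rho>_def by (auto intro: less_le_trans)
  qed
qed

end

theorem proposition6p3:
  fixes \<alpha> \<beta> :: real and f :: "real \<Rightarrow> real"
    and V0 P0 :: "int \<Rightarrow> real" and V P :: "int \<Rightarrow> real \<Rightarrow> real"
  assumes alpha_pos: "\<alpha> > 0" and beta_pos: "\<beta> > 0"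
    and f: "kpp_nonlinearity f"
    and V0_bdd: "bounded (range V0)" and P0_bdd: "bounded (range P0)"
    and V0_nonneg: "\<forall>j. V0 j \<ge> 0" and P0_nonneg: "\<forall>j. P0 j \<ge> 0"
    and nontriv: "\<exists>j. V0 j \<noteq> 0 \<or> P0 j \<noteq> 0"
    and V_cont: "\<forall>j. continuous_on {0..} (V j)"
    and P_cont: "\<forall>j. continuous_on {0..} (P j)"
    and V_ode: "\<forall>j t. t > 0 \<longrightarrow>
        (V j has_real_derivative (-2 * \<alpha> * V j t + \<beta> * (P j t + P (j + 1) t))) (at t)"
    and P_ode: "\<forall>j t. t > 0 \<longrightarrow>
        (P j has_real_derivative (f (P j t) + \<alpha> * (V j t + V (j - 1) t) - 2 * \<beta> * P j t)) (at t)"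
    and init: "\<forall>j. V j 0 = V0 j \<and> P j 0 = P0 j"
    and bdd: "\<forall>T\<ge>0. \<exists>M. \<forall>j. \<forall>t\<in>{0..T}. \<bar>V j t\<bar> \<le> M \<and> \<bar>P j t\<bar> \<le> M"
  shows "\<forall>J::int. \<forall>\<epsilon>>0. \<exists>T. \<forall>t\<ge>T. \<forall>j. \<bar>j\<bar> \<le> J \<longrightarrow>
           \<bar>V j t - \<beta> / \<alpha>\<bar> < \<epsilon> \<and> \<bar>P j t - 1\<bar> < \<epsilon>"
proof -
  interpret kpp_lattice_solution \<alpha> \<beta> f V P
    using alpha_pos beta_pos f V_cont P_cont V_ode P_ode bdd init V0_nonneg P0_nonneg
    by unfold_locales auto
  obtain i where nontrivial: "0 < V i 0 \<or> 0 < P i 0"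
    using nontriv init V0_nonneg P0_nonneg by (metis order_le_less)
  show ?thesis
  proof (intro allI impI)
    fix J :: int and \<epsilon> :: real
    assume "0 < \<epsilon>"
    have "\<forall>\<^sub>F t in at_top. \<forall>j. \<bar>j\<bar> \<le> J \<longrightarrow> \<bar>V j t - \<beta> / \<alpha>\<bar> < \<epsilon> \<and> \<bar>P j t - 1\<bar> < \<epsilon>"
      using eventually_upper[OF \<open>0 < \<epsilon>\<close>] eventually_lower[OF nontrivial \<open>0 < \<epsilon>\<close>, of J]
    proof eventually_elim
      case (elim t)
      then show ?case
        by (simp add: abs_less_iff) (metis add.commute less_diff_eq diff_less_eq)
    qed
    then show "\<exists>T. \<forall>t\<ge>T. \<forall>j. \<bar>j\<bar> \<le> J \<longrightarrow> \<bar>V j t - \<beta> / \<alpha>\<bar> < \<epsilon> \<and> \<bar>P j t - 1\<bar> < \<epsilon>"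
      by (simp add: eventually_at_top_linorder)
  qed
qed

end
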